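(* Let $A\in\mathbb{R}_+^{m\times m}$ and let $I=I_m$ be the identity matrix. Let $V_1,\dots,V_k$ be the vertex sets of the strongly connected components of the digraph $\vec G(A)$. Then: (1) $\rho(A,I)=\rho(A)$, and there exists $\mathbf{y}\in\mathbb{R}^m_+\setminus\{\mathbf{0}\}$ with $A\mathbf{y}=\rho(A)\mathbf{y}$. (2) There exists $\mathbf{x}=(x_1,\dots,x_m)^\top>\mathbf{0}$ with $\rho(A)=\max_{i\in[m]}\frac{(A\mathbf{x})_i}{x_i}$ if and only if the following holds: for every $j\in[k]$ with $\rho(A[V_j])=\rho(A)$, the vertex $\{V_j\}$ is a sink of the reduced digraph $\vec G(A)_{red}$. (3) If $A$ is irreducible, then a vector $\mathbf{x}$ with positive coordinates summing to $1$ satisfying the condition in (2) is unique. (4) $\hat\rho(A,I)=\min\{\rho(A[V_i]):\ \{V_i\}\text{ is a source of }\vec G(A)_{red}\}$, and there exists $\mathbf{w}\in\mathbb{R}^m_+\setminus\{\mathbf{0}\}$ with $A\mathbf{w}=\hat\rho(A,I)\mathbf{w}$.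
   Context: $[m]=\{1,\dots,m\}$. For $A,B\in\mathbb{R}_+^{m\times n}$ and $\mathbf{x}\in\mathbb{R}^n_+\setminus\{\mathbf{0}\}$, $r(A,B,\mathbf{x})=\max_{i\in[m]}\frac{(A\mathbf{x})_i}{(B\mathbf{x})_i}\in[0,\infty]$ with the conventions $\frac00=0$, $\frac c0=\infty$ for $c>0$; $\rho(A,B)=\inf\{r(A,B,\mathbf{x}):\mathbf{x}>\mathbf{0}\}$ and $\hat\rho(A,B)=\inf\{r(A,B,\mathbf{x}):\mathbf{x}\in\mathbb{R}^n_+\setminus\{\mathbf{0}\}\}$. $\rho(M)$ denotes the spectral radius of a square matrix $M$. For $A=[a_{ij}]\in\mathbb{R}_+^{m\times m}$, the digraph $\vec G(A)$ has vertex set $[m]$ and a directed edge $(i,j)$ iff $a_{ij}>0$. A strongly connected component is a maximal vertex set $W$ such that the induced subdigraph is strongly connected (any single vertex, with or without a loop, lies in one; a one-vertex digraph counts as strongly connected). $A$ is irreducible if $\vec G(A)$ is strongly connected. For $U\subseteq[m]$, $A[U]=[a_{ij}]_{i,j\in U}$ is the principal submatrix. The reduced digraph $\vec G(A)_{red}$ has vertices $\{V_1\},\dots,\{V_k\}$ (the strongly connected components) and an edge from $\{V_i\}$ to $\{V_j\}$, $i\ne j$, iff some edge of $\vec G(A)$ goes from a vertex of $V_i$ to a vertex of $V_j$. A vertex $\{V_p\}$ is a source if no edge of $\vec G(A)_{red}$ enters it, and a sink if no edge of $\vec G(A)_{red}$ leaves it. *)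

theory Defs
  imports "Jordan_Normal_Form.Spectral_Radius" "Jordan_Normal_Form.DL_Submatrix"
          "HOL-Library.Extended_Real"
begin

definition nonneg_mat :: "real mat \<Rightarrow> bool" where
  "nonneg_mat A \<longleftrightarrow> (\<forall>i<dim_row A. \<forall>j<dim_col A. A $$ (i,j) \<ge> 0)"

definition nonneg_vec :: "real vec \<Rightarrow> bool" where
  "nonneg_vec x \<longleftrightarrow> (\<forall>i<dim_vec x. x $ i \<ge> 0)"

definition pos_vec :: "real vec \<Rightarrow> bool" where
  "pos_vec x \<longleftrightarrow> (\<forall>i<dim_vec x. x $ i > 0)"

definition quot_conv :: "real \<Rightarrow> real \<Rightarrow> ereal" where
  "quot_conv c d = (if d = 0 then (if c = 0 then 0 else \<infinity>) else ereal (c / d))"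

definition r_ratio :: "real mat \<Rightarrow> real mat \<Rightarrow> real vec \<Rightarrow> ereal" where
  "r_ratio A B x = (MAX i\<in>{0..<dim_row A}. quot_conv ((A *\<^sub>v x) $ i) ((B *\<^sub>v x) $ i))"

definition rho_pair :: "real mat \<Rightarrow> real mat \<Rightarrow> ereal" where
  "rho_pair A B = Inf {r_ratio A B x | x. x \<in> carrier_vec (dim_col A) \<and> pos_vec x}"

definition rho_hat_pair :: "real mat \<Rightarrow> real mat \<Rightarrow> ereal" where
  "rho_hat_pair A B = Inf {r_ratio A B x | x. x \<in> carrier_vec (dim_col A) \<and> nonneg_vec x
                                               \<and> x \<noteq> 0\<^sub>v (dim_col A)}"

definition sr :: "real mat \<Rightarrow> real" where
  "sr A = spectral_radius (map_mat complex_of_real A)"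

definition principal_submat :: "real mat \<Rightarrow> nat set \<Rightarrow> real mat" where
  "principal_submat A U = submatrix A U U"

definition edges :: "real mat \<Rightarrow> (nat \<times> nat) set" where
  "edges A = {(i,j). i < dim_row A \<and> j < dim_row A \<and> A $$ (i,j) \<noteq> 0}"

definition strongly_connected_set :: "real mat \<Rightarrow> nat set \<Rightarrow> bool" where
  "strongly_connected_set A W \<longleftrightarrow> W \<noteq> {} \<and>
     (\<forall>i\<in>W. \<forall>j\<in>W. (i,j) \<in> (edges A \<inter> (W \<times> W))\<^sup>*)"

definition is_scc :: "real mat \<Rightarrow> nat set \<Rightarrow> bool" where
  "is_scc A W \<longleftrightarrow> W \<subseteq> {0..<dim_row A} \<and> strongly_connected_set A W \<and>
     (\<forall>W'. W \<subseteq> W' \<and> W' \<subseteq> {0..<dim_row A} \<and> strongly_connected_set A W' \<longrightarrow> W' = W)"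

definition irreducible_mat :: "real mat \<Rightarrow> bool" where
  "irreducible_mat A \<longleftrightarrow> strongly_connected_set A {0..<dim_row A}"

text \<open>Edge in the reduced digraph between distinct components.\<close>
definition red_edge :: "real mat \<Rightarrow> nat set \<Rightarrow> nat set \<Rightarrow> bool" where
  "red_edge A V W \<longleftrightarrow> V \<noteq> W \<and> (\<exists>i\<in>V. \<exists>j\<in>W. (i,j) \<in> edges A)"

definition is_source :: "real mat \<Rightarrow> nat set \<Rightarrow> bool" where
  "is_source A V \<longleftrightarrow> \<not> (\<exists>W. is_scc A W \<and> red_edge A W V)"

definition is_sink :: "real mat \<Rightarrow> nat set \<Rightarrow> bool" where
  "is_sink A V \<longleftrightarrow> \<not> (\<exists>W. is_scc A W \<and> red_edge A V W)"

end

theory Submission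
  imports Defs
begin

text \<open>
  The spectral radius is controlled by the Collatz--Wielandt bounds: a positive x with
  A x \<le> s x forces sr A \<le> s, and a nonnegative z \<noteq> 0 with A z \<ge> s z forces s \<le> sr A, the latter
  because the powers of a matrix of spectral radius below 1 stay bounded. Consequently s - A is
  invertible with nonnegative inverse for s > sr A. Solving (s - A) x = 1 gives positive vectors
  whose ratios approach sr A, which is (1); solving (s - A) x = |v| for an eigenvector v of
  modulus sr A and letting s decrease to sr A yields, after normalisation, a nonnegative
  Perron eigenvector.

  The other parts are proved class by class. If x > 0 satisfies A x \<le> sr A \<cdot> x and V is a basic
  class (sr A[V] = sr A), subtracting from x the largest multiple of the Perron vector of A[V]
  that stays below x leaves a nonnegative subinvariant gap that vanishes at one vertex of V,
  hence on all of V by strong connectivity and then along every edge leaving V: so V is a sink,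
  and for irreducible A the gap vanishes everywhere, which gives (3). Conversely, positive
  eigenvectors on the basic sink classes combine with the positive solution of a nonsingular
  system on the remaining vertices, whose principal submatrix has spectral radius below sr A.
  For (4), the support of a nonnegative x with finite r(A, I, x) is closed under predecessors,
  so it contains a source class V with sr A[V] \<le> r(A, I, x), and the Perron vector of A[V] for
  a source class V is an eigenvector of A.
\<close>

section \<open>Spectral radius of nonnegative matrices\<close>

lemma mult_mat_vec_index_sum:
  "M \<in> carrier_mat k n \<Longrightarrow> x \<in> carrier_vec n \<Longrightarrow> i < k \<Longrightarrow>
   (M *\<^sub>v x) $ i = (\<Sum>j<n. M $$ (i,j) * x $ j)"
  by (auto simp: mult_mat_vec_def scalar_prod_def atLeast0LessThan)

lemma smult_mult_mat_vec:
  "A \<in> carrier_mat k n \<Longrightarrow> v \<in> carrier_vec n \<Longrightarrow> (a \<cdot>\<^sub>m A) *\<^sub>v v = a \<cdot>\<^sub>v (A *\<^sub>v v)"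
  by (rule eq_vecI) (auto simp: scalar_prod_def sum_distrib_left ac_simps)

lemma nonzero_vec_index: "v \<in> carrier_vec n \<Longrightarrow> v \<noteq> 0\<^sub>v n \<Longrightarrow> \<exists>i<n. v $ i \<noteq> 0"
  by (metis eq_vecI carrier_vecD index_zero_vec)

lemma nonneg_matD: "nonneg_mat M \<Longrightarrow> M \<in> carrier_mat n n \<Longrightarrow> i < n \<Longrightarrow> j < n \<Longrightarrow> 0 \<le> M $$ (i,j)"
  unfolding nonneg_mat_def by auto

lemma nonneg_vecD: "nonneg_vec x \<Longrightarrow> x \<in> carrier_vec n \<Longrightarrow> i < n \<Longrightarrow> 0 \<le> x $ i"
  unfolding nonneg_vec_def by auto

lemma pos_vecD: "pos_vec x \<Longrightarrow> x \<in> carrier_vec n \<Longrightarrow> i < n \<Longrightarrow> 0 < x $ i"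
  unfolding pos_vec_def by auto

lemma mult_mat_vec_nonneg:
  assumes "nonneg_mat M" "M \<in> carrier_mat n n" "x \<in> carrier_vec n" "\<And>j. j < n \<Longrightarrow> 0 \<le> x $ j" "i < n"
  shows "0 \<le> (M *\<^sub>v x) $ i"
  unfolding mult_mat_vec_index_sum[OF assms(2,3,5)]
  by (intro sum_nonneg mult_nonneg_nonneg) (auto intro: nonneg_matD[OF assms(1,2)] assms(4,5))

lemma mult_mat_vec_mono:
  assumes "nonneg_mat M" "M \<in> carrier_mat n n" "x \<in> carrier_vec n" "y \<in> carrier_vec n"
    and "\<And>j. j < n \<Longrightarrow> x $ j \<le> y $ j" "i < n"
  shows "(M *\<^sub>v x) $ i \<le> (M *\<^sub>v y) $ i"
  unfolding mult_mat_vec_index_sum[OF assms(2,3,6)] mult_mat_vec_index_sum[OF assms(2,4,6)]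
  by (intro sum_mono mult_left_mono) (auto intro: nonneg_matD[OF assms(1,2)] assms(5,6))

lemma nonneg_mat_pow:
  assumes M: "nonneg_mat M" "M \<in> carrier_mat n n"
  shows "nonneg_mat (M ^\<^sub>m k)"
proof (induction k)
  case 0
  then show ?case unfolding nonneg_mat_def by auto
next
  case (Suc k)
  have Mk: "M ^\<^sub>m k \<in> carrier_mat n n" using M(2) by simp
  have "0 \<le> (M ^\<^sub>m k * M) $$ (i,j)" if "i < n" "j < n" for i j
    using that M Mk nonneg_matD[OF Suc Mk] nonneg_matD[OF M]
    by (auto simp: scalar_prod_def intro!: sum_nonneg mult_nonneg_nonneg)
  with M(2) show ?case unfolding nonneg_mat_def by auto
qed

lemma sr_nonneg: "M \<in> carrier_mat n n \<Longrightarrow> n > 0 \<Longrightarrow> 0 \<le> sr M"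
  using spectral_radius_mem_max(1)[of "map_mat complex_of_real M" n] unfolding sr_def by auto

lemma sr_attained:
  assumes "M \<in> carrier_mat n n" "n > 0"
  obtains lam v where "v \<in> carrier_vec n" "v \<noteq> 0\<^sub>v n"
    "map_mat complex_of_real M *\<^sub>v v = lam \<cdot>\<^sub>v v" "cmod lam = sr M"
proof -
  from spectral_radius_mem_max(1)[of "map_mat complex_of_real M" n] assms obtain lam where
    "lam \<in> spectrum (map_mat complex_of_real M)" "sr M = cmod lam" unfolding sr_def by auto
  with assms that show ?thesis unfolding spectrum_def eigenvalue_def eigenvector_def by auto
qed

lemma eigenvalue_norm_le_sr:
  assumes "M \<in> carrier_mat n n" "eigenvalue (map_mat complex_of_real M) lam"
  shows "cmod lam \<le> sr M"
proof -
  have Mc: "map_mat complex_of_real M \<in> carrier_mat n n" using assms(1) by auto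
  from spectral_radius_mem_max(2)[OF Mc eigenvalue_imp_nonzero_dim[OF Mc assms(2)]] assms(2)
  show ?thesis unfolding sr_def spectrum_def by auto
qed

lemma real_eigenvalue_abs_le_sr:
  assumes "M \<in> carrier_mat n n" "eigenvalue M s"
  shows "\<bar>s\<bar> \<le> sr M"
proof -
  have "eigenvalue (map_mat complex_of_real M) (complex_of_real s)"
    by (rule of_real_hom.eigenvalue_hom[OF assms])
  from eigenvalue_norm_le_sr[OF assms(1) this] show ?thesis by (simp only: norm_of_real)
qed

lemma sr_smult_le:
  assumes M: "M \<in> carrier_mat n n" and n: "n > 0" and c: "c > 0"
  shows "sr (c \<cdot>\<^sub>m M) \<le> c * sr M"
proof -
  have cM: "c \<cdot>\<^sub>m M \<in> carrier_mat n n" using M by simp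
  obtain lam v where v: "v \<in> carrier_vec n" "v \<noteq> 0\<^sub>v n"
    and ev: "map_mat complex_of_real (c \<cdot>\<^sub>m M) *\<^sub>v v = lam \<cdot>\<^sub>v v" and lam: "cmod lam = sr (c \<cdot>\<^sub>m M)"
    by (rule sr_attained[OF cM n])
  have "map_mat complex_of_real (c \<cdot>\<^sub>m M) = complex_of_real c \<cdot>\<^sub>m map_mat complex_of_real M"
    by (rule eq_matI) auto
  with ev v M have "complex_of_real c \<cdot>\<^sub>v (map_mat complex_of_real M *\<^sub>v v) = lam \<cdot>\<^sub>v v"
    by (simp add: smult_mult_mat_vec)
  hence "inverse (complex_of_real c) \<cdot>\<^sub>v (complex_of_real c \<cdot>\<^sub>v (map_mat complex_of_real M *\<^sub>v v))
      = inverse (complex_of_real c) \<cdot>\<^sub>v (lam \<cdot>\<^sub>v v)" by simp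
  hence "map_mat complex_of_real M *\<^sub>v v = (lam / complex_of_real c) \<cdot>\<^sub>v v"
    using c by (simp add: smult_smult_assoc divide_inverse mult.commute)
  hence "eigenvalue (map_mat complex_of_real M) (lam / complex_of_real c)"
    using v M unfolding eigenvalue_def eigenvector_def by auto
  from eigenvalue_norm_le_sr[OF M this] lam c show ?thesis
    by (simp add: norm_divide field_simps)
qed

lemma sr_less_1_bounded_powers:
  assumes N: "N \<in> carrier_mat n n" and sr: "sr N < 1"
  obtains C where "\<And>k i j. i < n \<Longrightarrow> j < n \<Longrightarrow> (N ^\<^sub>m k) $$ (i,j) \<le> C"
proof -
  have Nc: "map_mat complex_of_real N \<in> carrier_mat n n" using N by auto
  from spectral_radius_jnf_norm_bound_less_1_upper_triangular[OF Nc] sr obtain C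
    where C: "\<And>k. norm_bound (map_mat complex_of_real N ^\<^sub>m k) C" unfolding sr_def by auto
  have "(N ^\<^sub>m k) $$ (i,j) \<le> C" if "i < n" "j < n" for k i j
  proof -
    from C[of k] have "norm_bound (map_mat complex_of_real (N ^\<^sub>m k)) C"
      by (simp add: of_real_hom.mat_hom_pow[OF N])
    with that N have "norm (complex_of_real ((N ^\<^sub>m k) $$ (i,j))) \<le> C"
      unfolding norm_bound_def by auto
    then show ?thesis by simp
  qed
  with that show ?thesis by blast
qed

lemma superinvariant_pow:
  assumes N: "nonneg_mat N" "N \<in> carrier_mat n n" and z: "z \<in> carrier_vec n"
    and q: "0 \<le> q" and le: "\<And>i. i < n \<Longrightarrow> q * z $ i \<le> (N *\<^sub>v z) $ i" and i: "i < n"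
  shows "q ^ k * z $ i \<le> (N ^\<^sub>m k *\<^sub>v z) $ i"
  using i
proof (induction k arbitrary: i)
  case 0
  then show ?case using z N by auto
next
  case (Suc k)
  have Nk: "N ^\<^sub>m k \<in> carrier_mat n n" using N by auto
  have "q ^ Suc k * z $ i = q * (q ^ k * z $ i)" by simp
  also have "\<dots> \<le> q * (N ^\<^sub>m k *\<^sub>v z) $ i"
    using Suc q by (simp add: mult_left_mono)
  also have "\<dots> = (N ^\<^sub>m k *\<^sub>v (q \<cdot>\<^sub>v z)) $ i"
    using Suc.prems z carrier_matD(1)[OF Nk] by (simp add: mult_mat_vec[OF Nk z])
  also have "\<dots> \<le> (N ^\<^sub>m k *\<^sub>v (N *\<^sub>v z)) $ i"
    using z N le Suc.prems by (intro mult_mat_vec_mono[OF nonneg_mat_pow[OF N] Nk]) auto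
  also have "\<dots> = (N ^\<^sub>m Suc k *\<^sub>v z) $ i"
    using N(2) z by (simp add: assoc_mult_mat_vec[OF Nk N(2) z])
  finally show ?case .
qed

lemma sr_ge_if_superinvariant:
  assumes M: "nonneg_mat M" "M \<in> carrier_mat n n"
    and z: "z \<in> carrier_vec n" "nonneg_vec z" "z \<noteq> 0\<^sub>v n"
    and ge: "\<And>i. i < n \<Longrightarrow> s * z $ i \<le> (M *\<^sub>v z) $ i"
  shows "s \<le> sr M"
proof (rule ccontr)
  assume "\<not> s \<le> sr M"
  then have lt: "sr M < s" by simp
  obtain i0 where i0: "i0 < n" "z $ i0 \<noteq> 0" using nonzero_vec_index[OF z(1,3)] by blast
  have n: "n > 0" using i0 by auto
  have z0: "\<And>j. j < n \<Longrightarrow> 0 \<le> z $ j" using nonneg_vecD[OF z(2,1)] .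
  define t where "t = (sr M + s) / 2"
  have t: "0 < t" "sr M < t" "t < s" using lt sr_nonneg[OF M(2) n] by (auto simp: t_def)
  define N where "N = (1 / t) \<cdot>\<^sub>m M"
  have N: "nonneg_mat N" "N \<in> carrier_mat n n"
    using M t unfolding N_def nonneg_mat_def by auto
  have "sr N \<le> (1 / t) * sr M" unfolding N_def using t by (intro sr_smult_le[OF M(2) n]) auto
  also have "\<dots> < 1" using t by (simp add: field_simps)
  finally obtain C where C: "\<And>k i j. i < n \<Longrightarrow> j < n \<Longrightarrow> (N ^\<^sub>m k) $$ (i,j) \<le> C"
    using sr_less_1_bounded_powers[OF N(2)] by blast
  have Nz: "(s / t) * z $ i \<le> (N *\<^sub>v z) $ i" if i: "i < n" for i
  proof -
    have "(s / t) * z $ i = s * z $ i / t" by simp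
    also have "\<dots> \<le> (M *\<^sub>v z) $ i / t" using ge[OF i] t by (simp add: divide_right_mono)
    also have "\<dots> = (N *\<^sub>v z) $ i"
      using i carrier_matD(1)[OF M(2)] by (simp add: N_def smult_mult_mat_vec[OF M(2) z(1)])
    finally show ?thesis .
  qed
  define S where "S = (\<Sum>j<n. z $ j)"
  have bound: "(s / t) ^ k * z $ i0 \<le> C * S" for k
  proof -
    have Nk: "N ^\<^sub>m k \<in> carrier_mat n n" using N(2) by simp
    have "(s / t) ^ k * z $ i0 \<le> (N ^\<^sub>m k *\<^sub>v z) $ i0"
      using t by (intro superinvariant_pow[OF N z(1) _ Nz i0(1)]) auto
    also have "\<dots> = (\<Sum>j<n. (N ^\<^sub>m k) $$ (i0,j) * z $ j)"
      by (rule mult_mat_vec_index_sum[OF Nk z(1) i0(1)])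
    also have "\<dots> \<le> (\<Sum>j<n. C * z $ j)"
      by (intro sum_mono mult_right_mono C i0(1)) (auto simp: z0)
    finally show ?thesis by (simp add: S_def sum_distrib_left)
  qed
  have zi0: "0 < z $ i0" using z0[OF i0(1)] i0(2) by simp
  obtain k where "C * S / z $ i0 < (s / t) ^ k" using real_arch_pow[of "s / t"] t by auto
  with bound[of k] zi0 show False by (simp add: field_simps)
qed

lemma sr_le_if_subinvariant:
  assumes M: "nonneg_mat M" "M \<in> carrier_mat n n" and n: "n > 0"
    and x: "x \<in> carrier_vec n" "pos_vec x" and le: "\<And>i. i < n \<Longrightarrow> (M *\<^sub>v x) $ i \<le> s * x $ i"
  shows "sr M \<le> s"
proof -
  obtain lam v where v: "v \<in> carrier_vec n" "v \<noteq> 0\<^sub>v n"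
    and ev: "map_mat complex_of_real M *\<^sub>v v = lam \<cdot>\<^sub>v v" and lam: "cmod lam = sr M"
    by (rule sr_attained[OF M(2) n])
  have Mc: "map_mat complex_of_real M \<in> carrier_mat n n" using M by auto
  have xp: "\<And>i. i < n \<Longrightarrow> 0 < x $ i" using pos_vecD[OF x(2,1)] .
  define t where "t = Max ((\<lambda>i. cmod (v $ i) / x $ i) ` {..<n})"
  have "t \<in> (\<lambda>i. cmod (v $ i) / x $ i) ` {..<n}" unfolding t_def using n by (intro Max_in) auto
  then obtain i0 where i0: "i0 < n" "t = cmod (v $ i0) / x $ i0" by auto
  have vt: "cmod (v $ j) \<le> t * x $ j" if "j < n" for j
  proof -
    have "cmod (v $ j) / x $ j \<le> t" unfolding t_def using that by (intro Max_ge) auto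
    then show ?thesis using xp[OF that] by (simp add: divide_le_eq)
  qed
  obtain j where j: "j < n" "v $ j \<noteq> 0" using nonzero_vec_index[OF v] by blast
  have "0 < t" using vt[OF j(1)] j xp[OF j(1)] by (smt (verit) zero_less_mult_iff zero_less_norm_iff)
  have vi0: "cmod (v $ i0) = t * x $ i0" using i0 xp[OF i0(1)] by simp
  have "lam * v $ i0 = (\<Sum>j<n. complex_of_real (M $$ (i0,j)) * v $ j)"
    using ev i0 v mult_mat_vec_index_sum[OF Mc v(1) i0(1)] M by simp
  then have "cmod lam * cmod (v $ i0) = cmod (\<Sum>j<n. complex_of_real (M $$ (i0,j)) * v $ j)"
    by (metis norm_mult)
  also have "\<dots> \<le> (\<Sum>j<n. M $$ (i0,j) * cmod (v $ j))"
    using norm_sum[of "\<lambda>j. complex_of_real (M $$ (i0,j)) * v $ j" "{..<n}"]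
      nonneg_matD[OF M i0(1)] by (simp add: norm_mult)
  also have "\<dots> \<le> (\<Sum>j<n. M $$ (i0,j) * (t * x $ j))"
    by (intro sum_mono mult_left_mono) (auto simp: vt nonneg_matD[OF M i0(1)])
  also have "\<dots> = t * (M *\<^sub>v x) $ i0"
    by (simp add: mult_mat_vec_index_sum[OF M(2) x(1) i0(1)] sum_distrib_left mult_ac)
  also have "\<dots> \<le> t * (s * x $ i0)" using le[OF i0(1)] \<open>0 < t\<close> by simp
  also have "\<dots> = s * cmod (v $ i0)" using vi0 by simp
  finally have "cmod lam * cmod (v $ i0) \<le> s * cmod (v $ i0)" .
  moreover have "0 < cmod (v $ i0)" using vi0 \<open>0 < t\<close> xp[OF i0(1)] by simp
  ultimately show ?thesis using lam by simp
qed

lemma char_matrix_mult_vec_index: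
  assumes "M \<in> carrier_mat n n" "x \<in> carrier_vec n" "i < n"
  shows "(char_matrix M s *\<^sub>v x) $ i = (M *\<^sub>v x) $ i - s * x $ i"
  using assms unfolding char_matrix_def
  by (simp add: add_mult_distrib_mat_vec[of _ n n] smult_mult_mat_vec carrier_matD)

lemma shifted_system_solvable:
  assumes M: "M \<in> carrier_mat n n" and s: "sr M < s" and c: "c \<in> carrier_vec n"
  obtains x where "x \<in> carrier_vec n" "\<And>i. i < n \<Longrightarrow> s * x $ i - (M *\<^sub>v x) $ i = c $ i"
proof -
  have "\<not> eigenvalue M s" using real_eigenvalue_abs_le_sr[OF M] s by force
  then have "det (char_matrix M s) \<noteq> 0" using eigenvalue_det[OF M] by simp
  from det_non_zero_imp_unit[OF char_matrix_closed[OF M] this, of undefined]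
  obtain B where B: "B \<in> carrier_mat n n" "char_matrix M s * B = 1\<^sub>m n"
    unfolding Units_def ring_mat_def by auto
  define x where "x = B *\<^sub>v (- c)"
  have x: "x \<in> carrier_vec n" using B c by (simp add: x_def)
  have "char_matrix M s *\<^sub>v x = - c"
    unfolding x_def using assoc_mult_mat_vec[OF char_matrix_closed[OF M] B(1), of "- c" s] B(2) c
    by simp
  then have "(M *\<^sub>v x) $ i - s * x $ i = - c $ i" if "i < n" for i
    using that c char_matrix_mult_vec_index[OF M x that, of s] by (metis carrier_vecD index_uminus_vec(1))
  then show ?thesis using that x by force
qed

lemma nonneg_if_subinvariant_above_sr:
  assumes M: "nonneg_mat M" "M \<in> carrier_mat n n" and s: "sr M < s"
    and x: "x \<in> carrier_vec n" and le: "\<And>i. i < n \<Longrightarrow> (M *\<^sub>v x) $ i \<le> s * x $ i"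
    and i: "i < n"
  shows "0 \<le> x $ i"
proof (rule ccontr)
  assume neg: "\<not> 0 \<le> x $ i"
  \<comment> \<open>the negative part of x would be a superinvariant vector for s\<close>
  define y where "y = vec n (\<lambda>i. max 0 (- x $ i))"
  have y: "y \<in> carrier_vec n" "nonneg_vec y" unfolding y_def nonneg_vec_def by auto
  have "y $ i \<noteq> 0" using neg i unfolding y_def by auto
  then have "y \<noteq> 0\<^sub>v n" using i by auto
  have "s \<le> sr M"
  proof (rule sr_ge_if_superinvariant[OF M y \<open>y \<noteq> 0\<^sub>v n\<close>])
    fix k assume k: "k < n"
    have My: "0 \<le> (M *\<^sub>v y) $ k"
      by (rule mult_mat_vec_nonneg[OF M y(1) _ k]) (simp add: y_def)
    show "s * y $ k \<le> (M *\<^sub>v y) $ k"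
    proof (cases "0 \<le> x $ k")
      case True
      then show ?thesis using My k by (simp add: y_def)
    next
      case False
      have "s * y $ k = - (s * x $ k)" using False k by (simp add: y_def)
      also have "\<dots> \<le> - (M *\<^sub>v x) $ k" using le[OF k] by simp
      also have "\<dots> = (\<Sum>j<n. M $$ (k,j) * (- x $ j))"
        by (simp add: mult_mat_vec_index_sum[OF M(2) x k] sum_negf)
      also have "\<dots> \<le> (\<Sum>j<n. M $$ (k,j) * y $ j)"
        by (intro sum_mono mult_left_mono) (auto simp: y_def nonneg_matD[OF M k])
      finally show ?thesis by (simp add: mult_mat_vec_index_sum[OF M(2) y(1) k])
    qed
  qed
  with s show False by simp
qed

lemma shifted_solution_ge:
  assumes M: "nonneg_mat M" "M \<in> carrier_mat n n" and s: "sr M < s" and r: "r < s"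
    and p: "p \<in> carrier_vec n" "\<And>i. i < n \<Longrightarrow> r * p $ i \<le> (M *\<^sub>v p) $ i"
    and x: "x \<in> carrier_vec n" "\<And>i. i < n \<Longrightarrow> s * x $ i - (M *\<^sub>v x) $ i = p $ i"
    and i: "i < n"
  shows "p $ i \<le> (s - r) * x $ i"
proof -
  define d where "d = x - (1 / (s - r)) \<cdot>\<^sub>v p"
  have d: "d \<in> carrier_vec n" using x p by (simp add: d_def)
  have di: "d $ j = x $ j - p $ j / (s - r)" if "j < n" for j using that x p by (simp add: d_def)
  have "(M *\<^sub>v d) $ j \<le> s * d $ j" if j: "j < n" for j
  proof -
    have "(M *\<^sub>v d) $ j = (M *\<^sub>v x) $ j - (M *\<^sub>v p) $ j / (s - r)"
      using M x p j by (simp add: d_def mult_minus_distrib_mat_vec mult_mat_vec carrier_matD)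
    also have "\<dots> \<le> (s * x $ j - p $ j) - r * p $ j / (s - r)"
      using x(2)[OF j] divide_right_mono[OF p(2)[OF j], of "s - r"] r by simp
    also have "\<dots> = s * d $ j" using r by (simp add: di[OF j] field_simps)
    finally show ?thesis .
  qed
  from nonneg_if_subinvariant_above_sr[OF M s d this i] show ?thesis
    using di[OF i] r by (simp add: field_simps)
qed

section \<open>The Perron eigenvector\<close>

lemma componentwise_convergent_subseq:
  fixes X :: "nat \<Rightarrow> nat \<Rightarrow> real"
  assumes "\<And>k i. i < n \<Longrightarrow> \<bar>X k i\<bar> \<le> B"
  shows "\<exists>f. strict_mono f \<and> (\<forall>i<n. convergent (\<lambda>j. X (f j) i))"
  using assms
proof (induction n)
  case 0
  show ?case by (intro exI[of _ id]) (simp add: strict_mono_def)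
next
  case (Suc n)
  from Suc obtain f where f: "strict_mono f" "\<forall>i<n. convergent (\<lambda>j. X (f j) i)" by auto
  obtain g where g: "strict_mono g" "monoseq (\<lambda>j. X (f (g j)) n)"
    using seq_monosub[of "\<lambda>j. X (f j) n"] by auto
  have "Bseq (\<lambda>j. X (f (g j)) n)" using Suc.prems by (intro BseqI') auto
  with g have conv_n: "convergent (\<lambda>j. X (f (g j)) n)" by (intro Bseq_monoseq_convergent)
  have "convergent (\<lambda>j. X ((f \<circ> g) j) i)" if "i < Suc n" for i
  proof (cases "i = n")
    case True
    then show ?thesis using conv_n by simp
  next
    case False
    with that f have "convergent (\<lambda>j. X (f j) i)" by simp
    from convergent_subseq_convergent[OF this g(1)] show ?thesis by (simp add: o_def)
  qed
  with strict_mono_o[OF f(1) g(1)] show ?case by blast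
qed

lemma nonneg_eigenvector_of_approximate:
  assumes M: "M \<in> carrier_mat n n"
    and U: "\<And>k. U k \<in> carrier_vec n" "\<And>k. nonneg_vec (U k)" "\<And>k. (\<Sum>i<n. U k $ i) = 1"
    and res: "\<And>i. i < n \<Longrightarrow> (\<lambda>k. (M *\<^sub>v U k) $ i - r * U k $ i) \<longlonglongrightarrow> 0"
  obtains u where "u \<in> carrier_vec n" "nonneg_vec u" "u \<noteq> 0\<^sub>v n" "M *\<^sub>v u = r \<cdot>\<^sub>v u"
proof -
  have U0: "0 \<le> U k $ i" if "i < n" for k i using nonneg_vecD[OF U(2) U(1) that] .
  have "\<bar>U k $ i\<bar> \<le> 1" if "i < n" for k i
  proof -
    have "U k $ i \<le> (\<Sum>j<n. U k $ j)" by (rule member_le_sum) (use that U0 in auto)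
    with U(3) U0[OF that] show ?thesis by simp
  qed
  from componentwise_convergent_subseq[of n "\<lambda>k i. U k $ i", OF this]
  obtain f where f: "strict_mono f" "\<forall>i<n. convergent (\<lambda>j. U (f j) $ i)" by blast
  define u where "u = vec n (\<lambda>i. lim (\<lambda>j. U (f j) $ i))"
  have u: "u \<in> carrier_vec n" by (simp add: u_def)
  have lim: "(\<lambda>j. U (f j) $ i) \<longlonglongrightarrow> u $ i" if "i < n" for i
    using f(2) that by (simp add: u_def convergent_LIMSEQ_iff)
  have "M *\<^sub>v u = r \<cdot>\<^sub>v u"
  proof (rule eq_vecI)
    fix i assume "i < dim_vec (r \<cdot>\<^sub>v u)"
    then have i: "i < n" using u by simp
    have "(\<lambda>j. (M *\<^sub>v U (f j)) $ i) \<longlonglongrightarrow> (M *\<^sub>v u) $ i"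
      unfolding mult_mat_vec_index_sum[OF M U(1) i] mult_mat_vec_index_sum[OF M u i]
      by (intro tendsto_sum tendsto_mult tendsto_const lim) simp
    moreover have "(\<lambda>j. (M *\<^sub>v U (f j)) $ i) \<longlonglongrightarrow> r * u $ i"
    proof -
      have "(\<lambda>j. ((M *\<^sub>v U (f j)) $ i - r * U (f j) $ i) + r * U (f j) $ i) \<longlonglongrightarrow> 0 + r * u $ i"
        using LIMSEQ_subseq_LIMSEQ[OF res[OF i] f(1)]
        by (intro tendsto_add tendsto_mult tendsto_const lim[OF i]) (simp add: o_def)
      then show ?thesis by simp
    qed
    ultimately have "(M *\<^sub>v u) $ i = r * u $ i" by (rule LIMSEQ_unique)
    then show "(M *\<^sub>v u) $ i = (r \<cdot>\<^sub>v u) $ i" using u i by simp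
  qed (use M u in simp)
  moreover have "0 \<le> u $ i" if "i < n" for i
    using LIMSEQ_le_const[OF lim[OF that], of 0] U0[OF that] by blast
  then have "nonneg_vec u" unfolding nonneg_vec_def using u by simp
  moreover have "u \<noteq> 0\<^sub>v n"
  proof
    assume "u = 0\<^sub>v n"
    have "(\<lambda>j. \<Sum>i<n. U (f j) $ i) \<longlonglongrightarrow> (\<Sum>i<n. u $ i)" by (intro tendsto_sum lim) simp
    then have "(\<lambda>j. 1::real) \<longlonglongrightarrow> (\<Sum>i<n. u $ i)" using U(3) by simp
    then have "(\<Sum>i<n. u $ i) = 1" by (simp add: LIMSEQ_const_iff)
    with \<open>u = 0\<^sub>v n\<close> show False by simp
  qed
  ultimately show ?thesis using that u by blast
qed

lemma abs_eigenvector_superinvariant: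
  assumes M: "nonneg_mat M" "M \<in> carrier_mat n n" and n: "n > 0"
  obtains p where "p \<in> carrier_vec n" "nonneg_vec p" "p \<noteq> 0\<^sub>v n"
    "\<And>i. i < n \<Longrightarrow> sr M * p $ i \<le> (M *\<^sub>v p) $ i"
proof -
  obtain lam v where v: "v \<in> carrier_vec n" "v \<noteq> 0\<^sub>v n"
    and ev: "map_mat complex_of_real M *\<^sub>v v = lam \<cdot>\<^sub>v v" and lam: "cmod lam = sr M"
    by (rule sr_attained[OF M(2) n])
  have Mc: "map_mat complex_of_real M \<in> carrier_mat n n" using M by auto
  define p where "p = vec n (\<lambda>i. cmod (v $ i))"
  have p: "p \<in> carrier_vec n" "nonneg_vec p" unfolding p_def nonneg_vec_def by auto
  obtain j where "j < n" "v $ j \<noteq> 0" using nonzero_vec_index[OF v] by blast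
  then have "p \<noteq> 0\<^sub>v n" unfolding p_def by (metis index_vec index_zero_vec(1) norm_eq_zero)
  moreover have "sr M * p $ i \<le> (M *\<^sub>v p) $ i" if i: "i < n" for i
  proof -
    have "lam * v $ i = (\<Sum>j<n. complex_of_real (M $$ (i,j)) * v $ j)"
      using ev i v mult_mat_vec_index_sum[OF Mc v(1) i] M by simp
    then have "sr M * p $ i = cmod (\<Sum>j<n. complex_of_real (M $$ (i,j)) * v $ j)"
      using i lam by (metis p_def index_vec norm_mult)
    also have "\<dots> \<le> (\<Sum>j<n. M $$ (i,j) * p $ j)"
      using norm_sum[of "\<lambda>j. complex_of_real (M $$ (i,j)) * v $ j" "{..<n}"]
        nonneg_matD[OF M i] by (simp add: norm_mult p_def)
    finally show ?thesis by (simp add: mult_mat_vec_index_sum[OF M(2) p(1) i])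
  qed
  ultimately show ?thesis using that p by blast
qed

lemma decaying_difference_tendsto_zero:
  fixes u q :: "nat \<Rightarrow> real"
  assumes u: "\<And>k. 0 \<le> u k" "\<And>k. u k \<le> 1" and q: "\<And>k. 0 \<le> q k" "\<And>k. q k \<le> c / real (Suc k)"
  shows "(\<lambda>k. u k / real (Suc k) - q k) \<longlonglongrightarrow> 0"
proof (rule tendsto_sandwich[of "\<lambda>k. - (c / real (Suc k))" _ _ "\<lambda>k. 1 / real (Suc k)"])
  have "- (c / real (Suc k)) \<le> u k / real (Suc k) - q k" for k
  proof -
    have "0 \<le> u k / real (Suc k)" using u(1)[of k] by simp
    with q(2)[of k] show ?thesis by linarith
  qed
  then show "\<forall>\<^sub>F k in sequentially. - (c / real (Suc k)) \<le> u k / real (Suc k) - q k" by simp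
  have "u k / real (Suc k) - q k \<le> 1 / real (Suc k)" for k
  proof -
    have "u k / real (Suc k) \<le> 1 / real (Suc k)" using u(2)[of k] by (simp add: divide_right_mono)
    with q(1)[of k] show ?thesis by linarith
  qed
  then show "\<forall>\<^sub>F k in sequentially. u k / real (Suc k) - q k \<le> 1 / real (Suc k)" by simp
  show "(\<lambda>k. - (c / real (Suc k))) \<longlonglongrightarrow> 0"
    using tendsto_minus[OF LIMSEQ_Suc[OF lim_const_over_n[of c]]] by simp
  show "(\<lambda>k. 1 / real (Suc k)) \<longlonglongrightarrow> 0" by (rule LIMSEQ_Suc[OF lim_const_over_n])
qed

lemma resolvent_solutions_blow_up:
  assumes M: "nonneg_mat M" "M \<in> carrier_mat n n"
    and p: "p \<in> carrier_vec n" "\<And>i. i < n \<Longrightarrow> sr M * p $ i \<le> (M *\<^sub>v p) $ i"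
  obtains X where "\<And>k. X k \<in> carrier_vec n"
    "\<And>k i. i < n \<Longrightarrow> (sr M + 1 / real (Suc k)) * X k $ i - (M *\<^sub>v X k) $ i = p $ i"
    "\<And>k i. i < n \<Longrightarrow> real (Suc k) * p $ i \<le> X k $ i"
proof -
  define s where "s k = sr M + 1 / real (Suc k)" for k
  have s: "sr M < s k" for k by (simp add: s_def)
  have "\<exists>x. x \<in> carrier_vec n \<and> (\<forall>i<n. s k * x $ i - (M *\<^sub>v x) $ i = p $ i)" for k
    by (rule shifted_system_solvable[OF M(2) s p(1)]) blast
  then obtain X where X: "\<And>k. X k \<in> carrier_vec n"
    and Xeq: "\<And>k i. i < n \<Longrightarrow> s k * X k $ i - (M *\<^sub>v X k) $ i = p $ i" by metis
  have "real (Suc k) * p $ i \<le> X k $ i" if i: "i < n" for k i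
    using shifted_solution_ge[OF M s s p X Xeq i] by (simp add: s_def field_simps)
  with X Xeq that show ?thesis unfolding s_def by blast
qed

lemma approximate_perron_vectors:
  assumes M: "nonneg_mat M" "M \<in> carrier_mat n n" and n: "n > 0"
  obtains U where "\<And>k. U k \<in> carrier_vec n" "\<And>k. nonneg_vec (U k)" "\<And>k. (\<Sum>i<n. U k $ i) = 1"
    "\<And>i. i < n \<Longrightarrow> (\<lambda>k. (M *\<^sub>v U k) $ i - sr M * U k $ i) \<longlonglongrightarrow> 0"
proof -
  obtain p where p: "p \<in> carrier_vec n" "nonneg_vec p" "p \<noteq> 0\<^sub>v n"
    "\<And>i. i < n \<Longrightarrow> sr M * p $ i \<le> (M *\<^sub>v p) $ i"
    using abs_eigenvector_superinvariant[OF M n] by blast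
  have p0: "0 \<le> p $ i" if "i < n" for i using nonneg_vecD[OF p(2,1) that] .
  obtain X where X: "\<And>k. X k \<in> carrier_vec n"
    and Xeq: "\<And>k i. i < n \<Longrightarrow> (sr M + 1 / real (Suc k)) * X k $ i - (M *\<^sub>v X k) $ i = p $ i"
    and Xp: "\<And>k i. i < n \<Longrightarrow> real (Suc k) * p $ i \<le> X k $ i"
    using resolvent_solutions_blow_up[OF M p(1,4)] by blast
  have X0: "0 \<le> X k $ i" if "i < n" for k i
    using Xp[OF that, of k] p0[OF that] by (meson mult_nonneg_nonneg of_nat_0_le_iff order_trans)
  define P where "P = (\<Sum>i<n. p $ i)"
  obtain i0 where i0: "i0 < n" "p $ i0 \<noteq> 0" using nonzero_vec_index[OF p(1,3)] by blast
  have P: "0 < P" unfolding P_def using i0 p0 by (intro sum_pos2[of _ i0]) (auto simp: less_le)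
  define S where "S k = (\<Sum>i<n. X k $ i)" for k
  have S: "real (Suc k) * P \<le> S k" for k
    unfolding S_def P_def sum_distrib_left by (intro sum_mono Xp) simp
  have Spos: "0 < S k" for k using S[of k] P by (smt (verit) mult_pos_pos of_nat_0_less_iff zero_less_Suc)
  define U where "U k = (1 / S k) \<cdot>\<^sub>v X k" for k
  have U: "U k \<in> carrier_vec n" for k using X by (simp add: U_def)
  have Ui: "U k $ i = X k $ i / S k" if "i < n" for k i
    using that carrier_vecD[OF X[of k]] by (simp add: U_def)
  have U0: "0 \<le> U k $ i" if "i < n" for k i
    using X0[OF that, of k] Spos[of k] by (simp add: Ui[OF that])
  have Usum: "(\<Sum>i<n. U k $ i) = 1" for k
    using Spos[of k] by (simp add: Ui sum_divide_distrib[symmetric] S_def[symmetric])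
  have "(\<lambda>k. (M *\<^sub>v U k) $ i - sr M * U k $ i) \<longlonglongrightarrow> 0" if i: "i < n" for i
  proof -
    have "(M *\<^sub>v U k) $ i - sr M * U k $ i = U k $ i / real (Suc k) - p $ i / S k" for k
    proof -
      have "(M *\<^sub>v U k) $ i = ((sr M + 1 / real (Suc k)) * X k $ i - p $ i) / S k"
        using Xeq[OF i, of k] X i M by (simp add: U_def mult_mat_vec carrier_matD)
      then have "(M *\<^sub>v U k) $ i - sr M * U k $ i
          = ((sr M + 1 / real (Suc k)) * X k $ i - p $ i - sr M * X k $ i) / S k"
        by (simp add: Ui[OF i] diff_divide_distrib)
      also have "\<dots> = (X k $ i / real (Suc k) - p $ i) / S k" by (simp add: algebra_simps)
      also have "\<dots> = U k $ i / real (Suc k) - p $ i / S k" by (simp add: Ui[OF i] diff_divide_distrib)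
      finally show ?thesis .
    qed
    moreover have "(\<lambda>k. U k $ i / real (Suc k) - p $ i / S k) \<longlonglongrightarrow> 0"
    proof (rule decaying_difference_tendsto_zero)
      show "U k $ i \<le> 1" for k using member_le_sum[of i "{..<n}" "\<lambda>i. U k $ i"] U0 i Usum by simp
      show "p $ i / S k \<le> (p $ i / P) / real (Suc k)" for k
      proof -
        have "p $ i / S k \<le> p $ i / (real (Suc k) * P)"
          using S[of k] p0[OF i] P Spos[of k] by (intro divide_left_mono) (auto intro: mult_pos_pos)
        then show ?thesis by (simp add: mult.commute)
      qed
      show "0 \<le> p $ i / S k" for k using p0[OF i] Spos[of k] by simp
    qed (use U0[OF i] in simp)
    ultimately show ?thesis by simp
  qed
  moreover have "nonneg_vec (U k)" for k
    unfolding nonneg_vec_def using U0 carrier_vecD[OF U] by auto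
  ultimately show ?thesis using that U Usum by blast
qed

lemma perron_eigenvector:
  assumes M: "nonneg_mat M" "M \<in> carrier_mat n n" and n: "n > 0"
  obtains y where "y \<in> carrier_vec n" "nonneg_vec y" "y \<noteq> 0\<^sub>v n" "M *\<^sub>v y = sr M \<cdot>\<^sub>v y"
proof -
  obtain U where "\<And>k. U k \<in> carrier_vec n" "\<And>k. nonneg_vec (U k)" "\<And>k. (\<Sum>i<n. U k $ i) = 1"
    "\<And>i. i < n \<Longrightarrow> (\<lambda>k. (M *\<^sub>v U k) $ i - sr M * U k $ i) \<longlonglongrightarrow> 0"
    using approximate_perron_vectors[OF M n] by blast
  from nonneg_eigenvector_of_approximate[OF M(2) this] that show ?thesis by blast
qed

section \<open>Principal submatrices\<close>

definition pos_in :: "nat set \<Rightarrow> nat \<Rightarrow> nat" where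
  "pos_in V i = card {a\<in>V. a < i}"

lemma bij_betw_pick: assumes "finite V" shows "bij_betw (pick V) {..<card V} V"
proof (rule bij_betw_imageI)
  show "inj_on (pick V) {..<card V}"
  proof (rule inj_onI, rule ccontr)
    fix a b assume "a \<in> {..<card V}" "b \<in> {..<card V}" "pick V a = pick V b" "a \<noteq> b"
    then show False using pick_mono_le[of b V a] pick_mono_le[of a V b] by (auto simp: neq_iff)
  qed
  show "pick V ` {..<card V} = V"
  proof
    show "pick V ` {..<card V} \<subseteq> V" using pick_in_set_le by auto
    show "V \<subseteq> pick V ` {..<card V}"
    proof
      fix i assume i: "i \<in> V"
      have "card {a\<in>V. a < i} < card V" using i by (intro psubset_card_mono[OF assms]) auto
      with pick_card_in_set[OF i] show "i \<in> pick V ` {..<card V}" by force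
    qed
  qed
qed

lemma pos_in_less_card: "finite V \<Longrightarrow> i \<in> V \<Longrightarrow> pos_in V i < card V"
  unfolding pos_in_def by (rule psubset_card_mono) auto

lemma pick_pos_in: "i \<in> V \<Longrightarrow> pick V (pos_in V i) = i"
  unfolding pos_in_def by (rule pick_card_in_set)

lemma pos_in_pick: "j < card V \<Longrightarrow> pos_in V (pick V j) = j"
  unfolding pos_in_def by (rule card_pick_le)

lemma sum_reindex_pick: "finite V \<Longrightarrow> (\<Sum>j\<in>V. f j) = (\<Sum>j<card V. f (pick V j))"
  using sum.reindex_bij_betw[OF bij_betw_pick, of V f] by simp

context
  fixes A :: "real mat" and m :: nat and V :: "nat set"
  assumes A: "A \<in> carrier_mat m m" and V: "V \<subseteq> {0..<m}"
begin

lemma principal_submat_carrier: "principal_submat A V \<in> carrier_mat (card V) (card V)"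
proof -
  have "{i. i < dim_row A \<and> i \<in> V} = V" "{i. i < dim_col A \<and> i \<in> V} = V" using V A by auto
  then show ?thesis unfolding principal_submat_def carrier_mat_def by (simp add: dim_submatrix)
qed

lemma principal_submat_index:
  "i < card V \<Longrightarrow> j < card V \<Longrightarrow> principal_submat A V $$ (i,j) = A $$ (pick V i, pick V j)"
proof -
  have "{i. i < dim_row A \<and> i \<in> V} = V" "{i. i < dim_col A \<and> i \<in> V} = V" using V A by auto
  then show "i < card V \<Longrightarrow> j < card V \<Longrightarrow> ?thesis"
    unfolding principal_submat_def by (intro submatrix_index) auto
qed

lemma principal_submat_nonneg: "nonneg_mat A \<Longrightarrow> nonneg_mat (principal_submat A V)"
  unfolding nonneg_mat_def using principal_submat_carrier principal_submat_index A V pick_in_set_le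
  by (fastforce simp: subset_iff)

lemma principal_submat_mult_vec_index:
  assumes v: "v \<in> carrier_vec (card V)" and i: "i \<in> V"
  shows "(principal_submat A V *\<^sub>v v) $ pos_in V i = (\<Sum>j\<in>V. A $$ (i,j) * v $ pos_in V j)"
proof -
  have fin: "finite V" using V finite_subset by blast
  have "(principal_submat A V *\<^sub>v v) $ pos_in V i
      = (\<Sum>j<card V. principal_submat A V $$ (pos_in V i, j) * v $ j)"
    by (rule mult_mat_vec_index_sum[OF principal_submat_carrier v pos_in_less_card[OF fin i]])
  also have "\<dots> = (\<Sum>j<card V. A $$ (i, pick V j) * v $ pos_in V (pick V j))"
    by (intro sum.cong)
      (auto simp: principal_submat_index pos_in_less_card[OF fin i] pick_pos_in[OF i] pos_in_pick)
  also have "\<dots> = (\<Sum>j\<in>V. A $$ (i,j) * v $ pos_in V j)" by (rule sum_reindex_pick[OF fin, symmetric])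
  finally show ?thesis .
qed

lemma principal_submat_perron_vector:
  assumes nn: "nonneg_mat A" and ne: "V \<noteq> {}"
  obtains y where "y \<in> carrier_vec m" "nonneg_vec y" "\<forall>i<m. i \<notin> V \<longrightarrow> y $ i = 0"
    "\<exists>i\<in>V. y $ i \<noteq> 0" "\<forall>i\<in>V. (\<Sum>j\<in>V. A $$ (i,j) * y $ j) = sr (principal_submat A V) * y $ i"
proof -
  have fin: "finite V" using V finite_subset by blast
  obtain v where v: "v \<in> carrier_vec (card V)" "nonneg_vec v" "v \<noteq> 0\<^sub>v (card V)"
    "principal_submat A V *\<^sub>v v = sr (principal_submat A V) \<cdot>\<^sub>v v"
    using perron_eigenvector[OF principal_submat_nonneg[OF nn] principal_submat_carrier] fin ne
    by (metis card_gt_0_iff)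
  define y where "y = vec m (\<lambda>i. if i \<in> V then v $ pos_in V i else 0)"
  have yV: "y $ i = v $ pos_in V i" if "i \<in> V" for i unfolding y_def using V that by auto
  have "y \<in> carrier_vec m" unfolding y_def by simp
  moreover have "nonneg_vec y"
    using v(1,2) pos_in_less_card[OF fin] unfolding nonneg_vec_def y_def by auto
  moreover have "\<forall>i<m. i \<notin> V \<longrightarrow> y $ i = 0" by (simp add: y_def)
  moreover have "\<exists>i\<in>V. y $ i \<noteq> 0"
  proof -
    obtain j where j: "j < card V" "v $ j \<noteq> 0" using nonzero_vec_index[OF v(1,3)] by blast
    then have "y $ pick V j \<noteq> 0" using yV[OF pick_in_set_le[OF j(1)]] pos_in_pick[OF j(1)] by simp
    with pick_in_set_le[OF j(1)] show ?thesis by blast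
  qed
  moreover have "\<forall>i\<in>V. (\<Sum>j\<in>V. A $$ (i,j) * y $ j) = sr (principal_submat A V) * y $ i"
  proof
    fix i assume i: "i \<in> V"
    have "(\<Sum>j\<in>V. A $$ (i,j) * y $ j) = (principal_submat A V *\<^sub>v v) $ pos_in V i"
      by (simp add: principal_submat_mult_vec_index[OF v(1) i] yV)
    also have "\<dots> = sr (principal_submat A V) * y $ i"
      using v(1,4) pos_in_less_card[OF fin i] yV[OF i] by simp
    finally show "(\<Sum>j\<in>V. A $$ (i,j) * y $ j) = sr (principal_submat A V) * y $ i" .
  qed
  ultimately show ?thesis by (rule that)
qed

lemma sr_principal_submat_ge_if_superinvariant:
  assumes nn: "nonneg_mat A" and z: "z \<in> carrier_vec m" "\<And>i. i \<in> V \<Longrightarrow> 0 \<le> z $ i"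
    and i0: "i0 \<in> V" "z $ i0 \<noteq> 0"
    and ge: "\<And>i. i \<in> V \<Longrightarrow> s * z $ i \<le> (\<Sum>j\<in>V. A $$ (i,j) * z $ j)"
  shows "s \<le> sr (principal_submat A V)"
proof -
  have fin: "finite V" using V finite_subset by blast
  define v where "v = vec (card V) (\<lambda>j. z $ pick V j)"
  have v: "v \<in> carrier_vec (card V)" by (simp add: v_def)
  have vz: "v $ pos_in V i = z $ i" if "i \<in> V" for i
    using that pos_in_less_card[OF fin] pick_pos_in by (simp add: v_def)
  show ?thesis
  proof (rule sr_ge_if_superinvariant[OF principal_submat_nonneg[OF nn] principal_submat_carrier v])
    show "nonneg_vec v" unfolding nonneg_vec_def v_def using z(2) pick_in_set_le by auto
    show "v \<noteq> 0\<^sub>v (card V)"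
      using vz[OF i0(1)] i0(2) pos_in_less_card[OF fin i0(1)] by auto
    fix j assume j: "j < card V"
    have pj: "pick V j \<in> V" by (rule pick_in_set_le[OF j])
    have "s * v $ j = s * z $ pick V j" using j by (simp add: v_def)
    also have "\<dots> \<le> (\<Sum>l\<in>V. A $$ (pick V j, l) * v $ pos_in V l)" using ge[OF pj] by (simp add: vz)
    also have "\<dots> = (principal_submat A V *\<^sub>v v) $ j"
      using principal_submat_mult_vec_index[OF v pj] pos_in_pick[OF j] by simp
    finally show "s * v $ j \<le> (principal_submat A V *\<^sub>v v) $ j" .
  qed
qed

lemma principal_submat_shifted_solution_pos:
  assumes nn: "nonneg_mat A" and ne: "V \<noteq> {}" and s: "sr (principal_submat A V) < s"
    and c: "\<And>i. i \<in> V \<Longrightarrow> 0 < c i"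
  obtains x where "\<forall>i\<in>V. 0 < x i" "\<forall>i\<in>V. s * x i - (\<Sum>j\<in>V. A $$ (i,j) * x j) = c i"
proof -
  let ?B = "principal_submat A V"
  have fin: "finite V" using V finite_subset by blast
  have B: "nonneg_mat ?B" "?B \<in> carrier_mat (card V) (card V)"
    using principal_submat_nonneg[OF nn] principal_submat_carrier by auto
  define cv where "cv = vec (card V) (\<lambda>j. c (pick V j))"
  have cv: "cv \<in> carrier_vec (card V)" by (simp add: cv_def)
  obtain v where v: "v \<in> carrier_vec (card V)"
    and eq: "\<And>j. j < card V \<Longrightarrow> s * v $ j - (?B *\<^sub>v v) $ j = cv $ j"
    using shifted_system_solvable[OF B(2) s cv] by blast
  have v0: "0 \<le> v $ j" if "j < card V" for j
  proof (rule nonneg_if_subinvariant_above_sr[OF B s v _ that])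
    fix j assume j: "j < card V"
    have "0 < cv $ j" using j c pick_in_set_le[OF j] by (simp add: cv_def)
    then show "(?B *\<^sub>v v) $ j \<le> s * v $ j" using eq[OF j] by simp
  qed
  have "0 < s" using s sr_nonneg[OF B(2)] fin ne by (metis card_gt_0_iff le_less_trans)
  define x where "x i = v $ pos_in V i" for i
  have eqx: "s * x i - (\<Sum>j\<in>V. A $$ (i,j) * x j) = c i" if i: "i \<in> V" for i
    using eq[OF pos_in_less_card[OF fin i]] pos_in_less_card[OF fin i] pick_pos_in[OF i]
    by (simp add: x_def principal_submat_mult_vec_index[OF v i] cv_def)
  have "0 < x i" if i: "i \<in> V" for i
  proof -
    have "0 \<le> (\<Sum>j\<in>V. A $$ (i,j) * x j)"
      using V i nonneg_matD[OF nn A] v0 pos_in_less_card[OF fin]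
      by (intro sum_nonneg mult_nonneg_nonneg) (auto simp: x_def subset_iff)
    then have "0 < s * x i" using eqx[OF i] c[OF i] by linarith
    then show ?thesis using \<open>0 < s\<close> by (simp add: zero_less_mult_iff)
  qed
  with eqx that show ?thesis by blast
qed

end

section \<open>Strongly connected components\<close>

definition scc_of :: "real mat \<Rightarrow> nat \<Rightarrow> nat set" where
  "scc_of A w = {j. j < dim_row A \<and> (w,j) \<in> (edges A)\<^sup>* \<and> (j,w) \<in> (edges A)\<^sup>*}"

lemma edges_bounded: "(i,j) \<in> edges A \<Longrightarrow> i < dim_row A \<and> j < dim_row A"
  unfolding edges_def by auto

lemma scc_of_subset: "scc_of A w \<subseteq> {0..<dim_row A}"
  unfolding scc_of_def by auto

lemma mem_scc_of: "w < dim_row A \<Longrightarrow> w \<in> scc_of A w"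
  unfolding scc_of_def by auto

lemma rtrancl_edges_within_scc_of:
  assumes "(a,b) \<in> (edges A)\<^sup>*" "(b,w) \<in> (edges A)\<^sup>*" "(w,a) \<in> (edges A)\<^sup>*"
  shows "(a,b) \<in> (edges A \<inter> (scc_of A w \<times> scc_of A w))\<^sup>*"
  using assms(1,2)
proof (induction rule: rtrancl_induct)
  case base
  show ?case by simp
next
  case (step c b)
  have cw: "(c,w) \<in> (edges A)\<^sup>*" using step by (meson converse_rtrancl_into_rtrancl)
  have wc: "(w,c) \<in> (edges A)\<^sup>*" using assms(3) step(1) by (rule rtrancl_trans)
  have "c \<in> scc_of A w" "b \<in> scc_of A w"
    unfolding scc_of_def using edges_bounded[OF step(2)] cw wc step(2,4) by auto
  with step(2) have "(c,b) \<in> edges A \<inter> (scc_of A w \<times> scc_of A w)" by simp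
  with step.IH[OF cw] show ?case by (rule rtrancl_into_rtrancl)
qed

lemma strongly_connected_scc_of:
  assumes w: "w < dim_row A" shows "strongly_connected_set A (scc_of A w)"
  unfolding strongly_connected_set_def
proof (intro conjI ballI)
  show "scc_of A w \<noteq> {}" using mem_scc_of[OF w] by auto
  fix i j assume i: "i \<in> scc_of A w" and j: "j \<in> scc_of A w"
  have "(i,j) \<in> (edges A)\<^sup>*" using i j unfolding scc_of_def by (auto intro: rtrancl_trans)
  moreover have "(j,w) \<in> (edges A)\<^sup>*" "(w,i) \<in> (edges A)\<^sup>*" using i j unfolding scc_of_def by auto
  ultimately show "(i,j) \<in> (edges A \<inter> (scc_of A w \<times> scc_of A w))\<^sup>*"
    by (rule rtrancl_edges_within_scc_of)
qed

lemma strongly_connected_subset_scc_of: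
  assumes sc: "strongly_connected_set A W" and W: "W \<subseteq> {0..<dim_row A}" and w: "w \<in> W"
  shows "W \<subseteq> scc_of A w"
proof
  fix x assume x: "x \<in> W"
  have "(w,x) \<in> (edges A \<inter> (W \<times> W))\<^sup>*" "(x,w) \<in> (edges A \<inter> (W \<times> W))\<^sup>*"
    using sc x w unfolding strongly_connected_set_def by auto
  then have "(w,x) \<in> (edges A)\<^sup>*" "(x,w) \<in> (edges A)\<^sup>*"
    using rtrancl_mono[of "edges A \<inter> (W \<times> W)" "edges A"] by auto
  then show "x \<in> scc_of A w" unfolding scc_of_def using x W by auto
qed

lemma is_scc_scc_of: assumes w: "w < dim_row A" shows "is_scc A (scc_of A w)"
  unfolding is_scc_def
proof (intro conjI allI impI scc_of_subset strongly_connected_scc_of[OF w])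
  fix W assume W: "scc_of A w \<subseteq> W \<and> W \<subseteq> {0..<dim_row A} \<and> strongly_connected_set A W"
  then have "W \<subseteq> scc_of A w" using strongly_connected_subset_scc_of mem_scc_of[OF w] by blast
  with W show "W = scc_of A w" by blast
qed

lemma is_scc_eq_scc_of: assumes W: "is_scc A W" and w: "w \<in> W" shows "W = scc_of A w"
proof -
  have W1: "W \<subseteq> {0..<dim_row A}" "strongly_connected_set A W" using W unfolding is_scc_def by auto
  then have sub: "W \<subseteq> scc_of A w" and "w < dim_row A"
    using strongly_connected_subset_scc_of w by auto
  have "strongly_connected_set A (scc_of A w)"
    using \<open>w < dim_row A\<close> by (rule strongly_connected_scc_of)
  with W sub scc_of_subset[of A w] show ?thesis unfolding is_scc_def by blast
qed

lemma scc_of_eq: assumes "j \<in> scc_of A w" shows "scc_of A j = scc_of A w"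
proof -
  have "(j,w) \<in> (edges A)\<^sup>*" "j < dim_row A" using assms unfolding scc_of_def by auto
  then have "w < dim_row A" by (cases rule: rtranclE) (auto dest: edges_bounded)
  from is_scc_eq_scc_of[OF is_scc_scc_of[OF this] assms] show ?thesis by simp
qed

lemma is_scc_eqI: "is_scc A V \<Longrightarrow> is_scc A W \<Longrightarrow> x \<in> V \<Longrightarrow> x \<in> W \<Longrightarrow> V = W"
  using is_scc_eq_scc_of[of A V x] is_scc_eq_scc_of[of A W x] by simp

lemma propagate_within:
  assumes step: "\<And>l j. l \<in> V \<Longrightarrow> P l \<Longrightarrow> (l,j) \<in> edges A \<Longrightarrow> j \<in> V \<Longrightarrow> P j"
    and path: "(l0,l) \<in> (edges A \<inter> (V \<times> V))\<^sup>*" and "P l0" "l0 \<in> V"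
  shows "P l"
  using path
proof (induction rule: rtrancl_induct)
  case base
  show ?case by fact
next
  case (step y z)
  then show ?case using assms(1) by blast
qed

lemma is_sink_edge_closed:
  assumes V: "is_sink A V" and i: "i \<in> V" and e: "(i,j) \<in> edges A"
  shows "j \<in> V"
proof (rule ccontr)
  assume "j \<notin> V"
  have "j < dim_row A" using edges_bounded[OF e] by simp
  then have "is_scc A (scc_of A j) \<and> red_edge A V (scc_of A j)"
    unfolding red_edge_def using is_scc_scc_of mem_scc_of \<open>j \<notin> V\<close> i e by blast
  with V show False unfolding is_sink_def by blast
qed

lemma is_source_edge_closed:
  assumes V: "is_source A V" and j: "j \<in> V" and e: "(i,j) \<in> edges A"
  shows "i \<in> V"
proof (rule ccontr)
  assume "i \<notin> V"
  have "i < dim_row A" using edges_bounded[OF e] by simp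
  then have "is_scc A (scc_of A i) \<and> red_edge A (scc_of A i) V"
    unfolding red_edge_def using is_scc_scc_of mem_scc_of \<open>i \<notin> V\<close> j e by blast
  with V show False unfolding is_source_def by blast
qed

definition ancestors :: "real mat \<Rightarrow> nat \<Rightarrow> nat set" where
  "ancestors A j = {a. a < dim_row A \<and> (a,j) \<in> (edges A)\<^sup>*}"

lemma source_scc_within:
  assumes i: "i \<in> S" and S: "S \<subseteq> {0..<dim_row A}"
    and closed: "\<And>a b. (a,b) \<in> edges A \<Longrightarrow> b \<in> S \<Longrightarrow> a \<in> S"
  obtains V where "is_scc A V" "is_source A V" "V \<subseteq> S"
proof -
  have ancS: "ancestors A j \<subseteq> S" if "j \<in> S" for j
  proof
    fix a assume "a \<in> ancestors A j"
    then have "(a,j) \<in> (edges A)\<^sup>*" unfolding ancestors_def by auto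
    then show "a \<in> S" using that by (induction rule: converse_rtrancl_induct) (auto intro: closed)
  qed
  have fin: "finite (ancestors A k)" for k unfolding ancestors_def by auto
  have "i \<in> ancestors A i" unfolding ancestors_def using i S by auto
  \<comment> \<open>an ancestor of i with the fewest ancestors lies in a source class\<close>
  then obtain j where j: "j \<in> ancestors A i"
    and jmin: "\<And>j'. j' \<in> ancestors A i \<Longrightarrow> card (ancestors A j) \<le> card (ancestors A j')"
    using ex_has_least_nat[of "\<lambda>j. j \<in> ancestors A i" i "\<lambda>j. card (ancestors A j)"] by blast
  have jl: "j < dim_row A" and ji: "(j,i) \<in> (edges A)\<^sup>*" using j unfolding ancestors_def by auto
  define V where "V = scc_of A j"
  have Vscc: "is_scc A V" unfolding V_def by (rule is_scc_scc_of[OF jl])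
  have "V \<subseteq> ancestors A j" unfolding V_def scc_of_def ancestors_def by auto
  moreover have "ancestors A j \<subseteq> ancestors A i"
    unfolding ancestors_def using ji by (auto intro: rtrancl_trans)
  ultimately have VS: "V \<subseteq> S" using ancS[OF i] by blast
  have "is_source A V" unfolding is_source_def
  proof
    assume "\<exists>W. is_scc A W \<and> red_edge A W V"
    then obtain W w c where W: "is_scc A W" "W \<noteq> V" "w \<in> W" "c \<in> V" "(w,c) \<in> edges A"
      unfolding red_edge_def by auto
    have wl: "w < dim_row A" using edges_bounded[OF W(5)] by simp
    have "(c,j) \<in> (edges A)\<^sup>*" using W(4) unfolding V_def scc_of_def by auto
    with W(5) have wj: "(w,j) \<in> (edges A)\<^sup>*" by (rule converse_rtrancl_into_rtrancl)
    then have sub: "ancestors A w \<subseteq> ancestors A j"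
      unfolding ancestors_def by (auto intro: rtrancl_trans)
    have "w \<in> ancestors A i" unfolding ancestors_def using wl wj ji by (auto intro: rtrancl_trans)
    from jmin[OF this] sub fin have "ancestors A w = ancestors A j" by (meson card_seteq)
    moreover have "j \<in> ancestors A j" unfolding ancestors_def using jl by auto
    ultimately have "(j,w) \<in> (edges A)\<^sup>*" unfolding ancestors_def by auto
    then have "w \<in> V" unfolding V_def scc_of_def using wl wj by auto
    with is_scc_eqI[OF W(1) Vscc W(3)] W(2) show False by simp
  qed
  with Vscc VS that show ?thesis by blast
qed

lemma exists_terminal_vertex:
  assumes "finite T" "i1 \<in> T"
  obtains i where "i \<in> T" "\<forall>j\<in>T. (i,j) \<in> (edges A)\<^sup>* \<longrightarrow> (j,i) \<in> (edges A)\<^sup>*"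
proof -
  define D where "D i = {j \<in> T. (i,j) \<in> (edges A)\<^sup>*}" for i
  obtain i where i: "i \<in> T" and imin: "\<And>j. j \<in> T \<Longrightarrow> card (D i) \<le> card (D j)"
    using ex_has_least_nat[of "\<lambda>j. j \<in> T" i1 "\<lambda>j. card (D j)"] assms(2) by blast
  show ?thesis
  proof (rule that[OF i], intro ballI impI)
    fix j assume j: "j \<in> T" "(i,j) \<in> (edges A)\<^sup>*"
    have "D j \<subseteq> D i" unfolding D_def using j(2) by (auto intro: rtrancl_trans)
    moreover have "finite (D i)" unfolding D_def using assms(1) by simp
    ultimately have "D j = D i" using imin[OF j(1)] card_seteq by blast
    moreover have "i \<in> D i" unfolding D_def using i by simp
    ultimately show "(j,i) \<in> (edges A)\<^sup>*" unfolding D_def by blast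
  qed
qed

section \<open>Ratios and classes of a nonnegative matrix\<close>

locale nonneg_square =
  fixes A :: "real mat" and m :: nat
  assumes A: "A \<in> carrier_mat m m" and nn: "nonneg_mat A" and m: "m > 0"
begin

lemma A_nonneg: "i < m \<Longrightarrow> j < m \<Longrightarrow> 0 \<le> A $$ (i,j)"
  using nonneg_matD[OF nn A] .

lemma dim_row_A: "dim_row A = m"
  using A by simp

lemma edge_iff: "i < m \<Longrightarrow> j < m \<Longrightarrow> (i,j) \<in> edges A \<longleftrightarrow> A $$ (i,j) \<noteq> 0"
  unfolding edges_def dim_row_A by simp

lemma is_scc_subset: "is_scc A V \<Longrightarrow> V \<subseteq> {0..<m}"
  unfolding is_scc_def dim_row_A by simp

lemma is_scc_nonempty: "is_scc A V \<Longrightarrow> V \<noteq> {}"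
  unfolding is_scc_def strongly_connected_set_def by simp

lemma mult_vec_index_supported:
  assumes y: "y \<in> carrier_vec m" and V: "V \<subseteq> {0..<m}"
    and z: "\<And>j. j < m \<Longrightarrow> j \<notin> V \<Longrightarrow> y $ j = 0" and i: "i < m"
  shows "(A *\<^sub>v y) $ i = (\<Sum>j\<in>V. A $$ (i,j) * y $ j)"
  unfolding mult_mat_vec_index_sum[OF A y i] by (rule sum.mono_neutral_right) (use V z in auto)

lemma subinvariant_zero_successor:
  assumes w: "w \<in> carrier_vec m" "\<And>j. j < m \<Longrightarrow> 0 \<le> w $ j" and l: "l < m"
    and le: "(A *\<^sub>v w) $ l \<le> c * w $ l" and wl: "w $ l = 0" and e: "(l,j) \<in> edges A"
  shows "w $ j = 0"
proof -
  have j: "j < m" using edges_bounded[OF e] by (simp add: dim_row_A)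
  have terms: "\<forall>k\<in>{..<m}. 0 \<le> A $$ (l,k) * w $ k" using A_nonneg l w(2) by simp
  have "(\<Sum>k<m. A $$ (l,k) * w $ k) \<le> 0" using le wl by (simp add: mult_mat_vec_index_sum[OF A w(1) l])
  with terms have "(\<Sum>k<m. A $$ (l,k) * w $ k) = 0" by (meson antisym sum_nonneg)
  then have "\<forall>k\<in>{..<m}. A $$ (l,k) * w $ k = 0" using terms by (subst (asm) sum_nonneg_eq_0_iff) auto
  then have "A $$ (l,j) * w $ j = 0" using j by simp
  moreover have "A $$ (l,j) \<noteq> 0" using e edge_iff[OF l j] by simp
  ultimately show ?thesis by simp
qed

lemma subinvariant_vanishes_on_strongly_connected:
  assumes V: "strongly_connected_set A V" "V \<subseteq> {0..<m}"
    and w: "w \<in> carrier_vec m" "\<And>j. j < m \<Longrightarrow> 0 \<le> w $ j"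
    and le: "\<And>l. l \<in> V \<Longrightarrow> (A *\<^sub>v w) $ l \<le> c * w $ l"
    and l0: "l0 \<in> V" "w $ l0 = 0" and l: "l \<in> V"
  shows "w $ l = 0"
proof -
  have path: "(l0,l) \<in> (edges A \<inter> (V \<times> V))\<^sup>*"
    using V(1) l0 l unfolding strongly_connected_set_def by blast
  have step: "w $ b = 0" if "a \<in> V" "w $ a = 0" "(a,b) \<in> edges A" for a b
    using subinvariant_zero_successor[OF w _ le[OF that(1)] that(2,3)] that(1) V(2) by auto
  show ?thesis using propagate_within[where P = "\<lambda>l. w $ l = 0", OF step path l0(2,1)] by simp
qed

lemma maximal_multiple_below:
  fixes x y :: "real vec"
  assumes V: "V \<subseteq> {0..<m}" and y: "y \<in> carrier_vec m" "\<And>j. j < m \<Longrightarrow> 0 \<le> y $ j"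
    "\<And>j. j < m \<Longrightarrow> j \<notin> V \<Longrightarrow> y $ j = 0" "i1 \<in> V" "y $ i1 \<noteq> 0"
    and x: "\<And>l. l \<in> V \<Longrightarrow> 0 < x $ l" "\<And>l. l < m \<Longrightarrow> 0 \<le> x $ l"
  obtains \<tau> l0 where "0 < \<tau>" "l0 \<in> V" "0 < y $ l0" "x $ l0 = \<tau> * y $ l0"
    "\<And>l. l < m \<Longrightarrow> \<tau> * y $ l \<le> x $ l"
proof -
  define T where "T = {l\<in>V. 0 < y $ l}"
  have "i1 < m" using y(4) V by auto
  then have "0 < y $ i1" using y(2)[of i1] y(5) by (simp add: less_le)
  then have i1T: "i1 \<in> T" unfolding T_def using y(4) by simp
  have "T \<subseteq> {0..<m}" using V unfolding T_def by auto
  then have finT: "finite T" by (rule finite_subset) simp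
  define \<tau> where "\<tau> = Min ((\<lambda>l. x $ l / y $ l) ` T)"
  have "\<tau> \<in> (\<lambda>l. x $ l / y $ l) ` T" unfolding \<tau>_def using finT i1T by (intro Min_in) auto
  then obtain l0 where l0T: "l0 \<in> T" and \<tau>_l0: "\<tau> = x $ l0 / y $ l0" by blast
  have l0: "l0 \<in> V" "0 < y $ l0" using l0T unfolding T_def by auto
  have pos: "0 < \<tau>" using x(1)[OF l0(1)] l0(2) \<tau>_l0 by simp
  have touch: "x $ l0 = \<tau> * y $ l0" using l0(2) \<tau>_l0 by simp
  have below: "\<tau> * y $ l \<le> x $ l" if l: "l < m" for l
  proof (cases "l \<in> T")
    case True
    then have "\<tau> \<le> x $ l / y $ l" unfolding \<tau>_def using finT by (intro Min_le) auto
    moreover have "0 < y $ l" using True unfolding T_def by simp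
    ultimately show ?thesis by (simp add: le_divide_eq)
  next
    case False
    then have "y $ l = 0" unfolding T_def using y(2)[OF l] y(3)[OF l] by (cases "l \<in> V") auto
    then show ?thesis using x(2)[OF l] by simp
  qed
  show ?thesis by (rule that[OF pos l0 touch below])
qed

lemma subinvariant_minus_perron_multiple:
  assumes V: "strongly_connected_set A V" "V \<subseteq> {0..<m}"
    and y: "y \<in> carrier_vec m" "nonneg_vec y" "\<And>j. j < m \<Longrightarrow> j \<notin> V \<Longrightarrow> y $ j = 0"
      "i1 \<in> V" "y $ i1 \<noteq> 0" "\<And>l. l \<in> V \<Longrightarrow> (A *\<^sub>v y) $ l = sr A * y $ l"
    and x: "x \<in> carrier_vec m" "pos_vec x" "\<And>i. i < m \<Longrightarrow> (A *\<^sub>v x) $ i \<le> sr A * x $ i"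
  obtains w where "w \<in> carrier_vec m" "\<forall>l<m. 0 \<le> w $ l"
    "\<forall>l\<in>V. (A *\<^sub>v w) $ l \<le> sr A * w $ l" "\<forall>l\<in>V. w $ l = 0" "\<exists>\<tau>. w = x - \<tau> \<cdot>\<^sub>v y"
proof -
  have y0: "\<And>j. j < m \<Longrightarrow> 0 \<le> y $ j" using nonneg_vecD[OF y(2,1)] by blast
  have xV: "\<And>l. l \<in> V \<Longrightarrow> 0 < x $ l" and x0: "\<And>l. l < m \<Longrightarrow> 0 \<le> x $ l"
    using pos_vecD[OF x(2,1)] V(2) by (auto simp: less_imp_le subset_iff)
  obtain \<tau> l0 where \<tau>: "l0 \<in> V" "x $ l0 = \<tau> * y $ l0" "\<And>l. l < m \<Longrightarrow> \<tau> * y $ l \<le> x $ l"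
    using maximal_multiple_below[OF V(2) y(1) y0 y(3-5) xV x0] by blast
  define w where "w = x - \<tau> \<cdot>\<^sub>v y"
  have w: "w \<in> carrier_vec m" unfolding w_def using x y by simp
  have wi: "w $ l = x $ l - \<tau> * y $ l" if "l < m" for l unfolding w_def using that x y by simp
  have w0: "0 \<le> w $ l" if "l < m" for l using wi[OF that] \<tau>(3)[OF that] by simp
  have Aw: "(A *\<^sub>v w) $ l \<le> sr A * w $ l" if l: "l \<in> V" for l
  proof -
    have lm: "l < m" using l V(2) by auto
    have "(A *\<^sub>v w) $ l = (A *\<^sub>v x) $ l - \<tau> * (sr A * y $ l)"
      unfolding w_def using A x y lm y(6)[OF l] by (simp add: mult_minus_distrib_mat_vec mult_mat_vec)
    also have "\<dots> \<le> sr A * w $ l" using x(3)[OF lm] by (simp add: wi[OF lm] algebra_simps)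
    finally show ?thesis .
  qed
  have "w $ l0 = 0" using wi[of l0] \<tau>(1,2) V(2) by auto
  then have "w $ l = 0" if "l \<in> V" for l
    using subinvariant_vanishes_on_strongly_connected[OF V w w0 Aw \<tau>(1) _ that] by blast
  with w w0 Aw that show ?thesis unfolding w_def by blast
qed

lemma r_ratio_pos_vec:
  assumes x: "x \<in> carrier_vec m" "pos_vec x"
  shows "r_ratio A (1\<^sub>m m) x = ereal (MAX i\<in>{0..<m}. (A *\<^sub>v x) $ i / x $ i)"
proof -
  have "quot_conv ((A *\<^sub>v x) $ i) ((1\<^sub>m m *\<^sub>v x) $ i) = ereal ((A *\<^sub>v x) $ i / x $ i)" if "i < m" for i
    using pos_vecD[OF x(2,1) that] x that by (simp add: quot_conv_def)
  then have "r_ratio A (1\<^sub>m m) x = (MAX i\<in>{0..<m}. ereal ((A *\<^sub>v x) $ i / x $ i))"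
    unfolding r_ratio_def dim_row_A by (intro arg_cong[where f = Max] image_cong) auto
  also have "\<dots> = ereal (MAX i\<in>{0..<m}. (A *\<^sub>v x) $ i / x $ i)"
    using mono_Max_commute[of ereal "(\<lambda>i. (A *\<^sub>v x) $ i / x $ i) ` {0..<m}"] m
    by (simp add: mono_def image_image)
  finally show ?thesis .
qed

lemma max_ratio_le_iff:
  assumes x: "x \<in> carrier_vec m" "pos_vec x"
  shows "(MAX i\<in>{0..<m}. (A *\<^sub>v x) $ i / x $ i) \<le> c \<longleftrightarrow> (\<forall>i<m. (A *\<^sub>v x) $ i \<le> c * x $ i)"
  using m pos_vecD[OF x(2,1)] by (auto simp: divide_le_eq mult.commute)

lemma sr_le_max_ratio:
  assumes x: "x \<in> carrier_vec m" "pos_vec x"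
  shows "sr A \<le> (MAX i\<in>{0..<m}. (A *\<^sub>v x) $ i / x $ i)"
proof (rule sr_le_if_subinvariant[OF nn A m x])
  show "(A *\<^sub>v x) $ i \<le> (MAX i\<in>{0..<m}. (A *\<^sub>v x) $ i / x $ i) * x $ i" if "i < m" for i
    using max_ratio_le_iff[OF x, of "MAX i\<in>{0..<m}. (A *\<^sub>v x) $ i / x $ i"] that by simp
qed

lemma sr_eq_max_ratio_iff:
  assumes x: "x \<in> carrier_vec m" "pos_vec x"
  shows "sr A = (MAX i\<in>{0..<m}. (A *\<^sub>v x) $ i / x $ i) \<longleftrightarrow> (\<forall>i<m. (A *\<^sub>v x) $ i \<le> sr A * x $ i)"
  using max_ratio_le_iff[OF x, of "sr A"] sr_le_max_ratio[OF x] by auto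

lemma rho_pair_eq_sr: "rho_pair A (1\<^sub>m m) = ereal (sr A)"
proof (rule antisym)
  show "ereal (sr A) \<le> rho_pair A (1\<^sub>m m)"
    unfolding rho_pair_def using A sr_le_max_ratio r_ratio_pos_vec by (auto intro!: Inf_greatest)
  show "rho_pair A (1\<^sub>m m) \<le> ereal (sr A)"
  proof (rule ereal_le_epsilon2)
    fix e :: real assume e: "0 < e"
    \<comment> \<open>the solution of (sr A + e) x - A x = 1 is positive and has all ratios below sr A + e\<close>
    define s where "s = sr A + e"
    have s: "sr A < s" "0 < s" using e sr_nonneg[OF A m] by (auto simp: s_def)
    obtain x where x: "x \<in> carrier_vec m"
      and eq: "\<And>i. i < m \<Longrightarrow> s * x $ i - (A *\<^sub>v x) $ i = 1"
      using shifted_system_solvable[OF A s(1), of "vec m (\<lambda>_. 1)"] by auto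
    have x0: "0 \<le> x $ i" if "i < m" for i
      using eq by (intro nonneg_if_subinvariant_above_sr[OF nn A s(1) x _ that]) (simp add: algebra_simps)
    have "0 < x $ i" if i: "i < m" for i
    proof -
      have "0 < s * x $ i" using eq[OF i] mult_mat_vec_nonneg[OF nn A x x0 i] by linarith
      then show ?thesis using s(2) by (simp add: zero_less_mult_iff)
    qed
    then have px: "pos_vec x" unfolding pos_vec_def using x by simp
    have "(MAX i\<in>{0..<m}. (A *\<^sub>v x) $ i / x $ i) \<le> s"
      unfolding max_ratio_le_iff[OF x px]
    proof (intro allI impI)
      fix i assume "i < m"
      from eq[OF this] show "(A *\<^sub>v x) $ i \<le> s * x $ i" by linarith
    qed
    then have "r_ratio A (1\<^sub>m m) x \<le> ereal (sr A) + ereal e" by (simp add: r_ratio_pos_vec[OF x px] s_def)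
    moreover have "rho_pair A (1\<^sub>m m) \<le> r_ratio A (1\<^sub>m m) x"
      unfolding rho_pair_def using x px A by (intro Inf_lower) auto
    ultimately show "rho_pair A (1\<^sub>m m) \<le> ereal (sr A) + ereal e" by simp
  qed
qed

lemma pos_subinvariant_multiple_of_perron:
  assumes irr: "irreducible_mat A"
    and y: "y \<in> carrier_vec m" "nonneg_vec y" "y \<noteq> 0\<^sub>v m" "A *\<^sub>v y = sr A \<cdot>\<^sub>v y"
    and x: "x \<in> carrier_vec m" "pos_vec x" "\<And>i. i < m \<Longrightarrow> (A *\<^sub>v x) $ i \<le> sr A * x $ i"
  shows "\<exists>\<tau>. x = \<tau> \<cdot>\<^sub>v y"
proof -
  have sc: "strongly_connected_set A {0..<m}" using irr unfolding irreducible_mat_def dim_row_A .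
  obtain i1 where i1: "i1 \<in> {0..<m}" "y $ i1 \<noteq> 0" using nonzero_vec_index[OF y(1,3)] by auto
  have supp: "\<And>j. j < m \<Longrightarrow> j \<notin> {0..<m} \<Longrightarrow> y $ j = 0" by simp
  have eig: "\<And>l. l \<in> {0..<m} \<Longrightarrow> (A *\<^sub>v y) $ l = sr A * y $ l" using y(1,4) by simp
  obtain w where w: "w \<in> carrier_vec m" "\<forall>l<m. 0 \<le> w $ l"
    "\<forall>l\<in>{0..<m}. (A *\<^sub>v w) $ l \<le> sr A * w $ l" "\<forall>l\<in>{0..<m}. w $ l = 0" "\<exists>\<tau>. w = x - \<tau> \<cdot>\<^sub>v y"
    by (rule subinvariant_minus_perron_multiple[OF sc order_refl y(1,2) supp i1 eig x])
  then obtain \<tau> where "w = x - \<tau> \<cdot>\<^sub>v y" by blast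
  with w(4) have "x = \<tau> \<cdot>\<^sub>v y" using x(1) y(1) by (intro eq_vecI) auto
  then show ?thesis by blast
qed

lemma normalized_max_ratio_vector_unique:
  assumes irr: "irreducible_mat A"
  shows "\<exists>\<^sub>\<le>\<^sub>1 x. x \<in> carrier_vec m \<and> pos_vec x \<and> (\<Sum>i<m. x $ i) = 1 \<and>
          sr A = (MAX i\<in>{0..<m}. (A *\<^sub>v x) $ i / x $ i)"
proof (rule Uniq_I)
  obtain y where y: "y \<in> carrier_vec m" "nonneg_vec y" "y \<noteq> 0\<^sub>v m" "A *\<^sub>v y = sr A \<cdot>\<^sub>v y"
    using perron_eigenvector[OF nn A m] by blast
  have scaled: "x = (1 / (\<Sum>i<m. y $ i)) \<cdot>\<^sub>v y"
    if "x \<in> carrier_vec m \<and> pos_vec x \<and> (\<Sum>i<m. x $ i) = 1 \<and> sr A = (MAX i\<in>{0..<m}. (A *\<^sub>v x) $ i / x $ i)"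
    for x
  proof -
    from that have x: "x \<in> carrier_vec m" "pos_vec x" and sum: "(\<Sum>i<m. x $ i) = 1" by auto
    with that obtain \<tau> where x\<tau>: "x = \<tau> \<cdot>\<^sub>v y"
      using pos_subinvariant_multiple_of_perron[OF irr y x] sr_eq_max_ratio_iff[OF x] by blast
    have "\<tau> * (\<Sum>i<m. y $ i) = 1" using sum y(1) by (simp add: x\<tau> sum_distrib_left)
    then have "\<tau> = 1 / (\<Sum>i<m. y $ i)" by (auto simp: eq_divide_eq)
    then show ?thesis using x\<tau> by simp
  qed
  fix x x' assume "x \<in> carrier_vec m \<and> pos_vec x \<and> (\<Sum>i<m. x $ i) = 1 \<and> sr A = (MAX i\<in>{0..<m}. (A *\<^sub>v x) $ i / x $ i)"
    "x' \<in> carrier_vec m \<and> pos_vec x' \<and> (\<Sum>i<m. x' $ i) = 1 \<and> sr A = (MAX i\<in>{0..<m}. (A *\<^sub>v x') $ i / x' $ i)"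
  from this[THEN scaled] show "x = x'" by simp
qed

lemma sr_principal_submat_le:
  assumes V: "V \<subseteq> {0..<m}" "V \<noteq> {}"
  shows "sr (principal_submat A V) \<le> sr A"
proof -
  obtain y where y: "y \<in> carrier_vec m" "nonneg_vec y" "\<forall>i<m. i \<notin> V \<longrightarrow> y $ i = 0"
    "\<exists>i\<in>V. y $ i \<noteq> 0" "\<forall>i\<in>V. (\<Sum>j\<in>V. A $$ (i,j) * y $ j) = sr (principal_submat A V) * y $ i"
    by (rule principal_submat_perron_vector[OF A V(1) nn V(2)])
  have "y \<noteq> 0\<^sub>v m" using y(4) V(1) by auto
  show ?thesis
  proof (rule sr_ge_if_superinvariant[OF nn A y(1,2) \<open>y \<noteq> 0\<^sub>v m\<close>])
    fix i assume i: "i < m"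
    show "sr (principal_submat A V) * y $ i \<le> (A *\<^sub>v y) $ i"
    proof (cases "i \<in> V")
      case True
      then show ?thesis using y(5) mult_vec_index_supported[OF y(1) V(1) y(3)[rule_format] i] by simp
    next
      case False
      then show ?thesis
        using y(3) i mult_mat_vec_nonneg[OF nn A y(1) nonneg_vecD[OF y(2,1)] i] by simp
    qed
  qed
qed

lemma mult_vec_index_sink:
  assumes V: "is_scc A V" "is_sink A V" and i: "i \<in> V" and y: "y \<in> carrier_vec m"
  shows "(A *\<^sub>v y) $ i = (\<Sum>j\<in>V. A $$ (i,j) * y $ j)"
proof -
  have Vsub: "V \<subseteq> {0..<m}" using is_scc_subset[OF V(1)] .
  have im: "i < m" using i Vsub by auto
  have "A $$ (i,j) = 0" if "j < m" "j \<notin> V" for j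
    using is_sink_edge_closed[OF V(2) i] edge_iff[OF im that(1)] that(2) by blast
  then show ?thesis
    unfolding mult_mat_vec_index_sum[OF A y im] by (intro sum.mono_neutral_right) (use Vsub in auto)
qed

lemma sink_if_pos_subinvariant:
  assumes x: "x \<in> carrier_vec m" "pos_vec x" "\<And>i. i < m \<Longrightarrow> (A *\<^sub>v x) $ i \<le> sr A * x $ i"
    and V: "is_scc A V" "sr (principal_submat A V) = sr A"
  shows "is_sink A V"
proof (rule ccontr)
  assume "\<not> is_sink A V"
  then obtain W i j where W: "is_scc A W" "V \<noteq> W" "i \<in> V" "j \<in> W" "(i,j) \<in> edges A"
    unfolding is_sink_def red_edge_def by blast
  have Vsub: "V \<subseteq> {0..<m}" and Vne: "V \<noteq> {}" using is_scc_subset[OF V(1)] is_scc_nonempty[OF V(1)] .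
  have jV: "j \<notin> V" using is_scc_eqI[OF V(1) W(1) _ W(4)] W(2) by auto
  have im: "i < m" and jm: "j < m" using edges_bounded[OF W(5)] by (simp_all add: dim_row_A)
  obtain y where y: "y \<in> carrier_vec m" "nonneg_vec y" "\<forall>i<m. i \<notin> V \<longrightarrow> y $ i = 0"
    "\<exists>i\<in>V. y $ i \<noteq> 0" "\<forall>i\<in>V. (\<Sum>j\<in>V. A $$ (i,j) * y $ j) = sr (principal_submat A V) * y $ i"
    by (rule principal_submat_perron_vector[OF A Vsub nn Vne])
  obtain i1 where i1: "i1 \<in> V" "y $ i1 \<noteq> 0" using y(4) by blast
  have eig: "(A *\<^sub>v y) $ l = sr A * y $ l" if "l \<in> V" for l
    using mult_vec_index_supported[OF y(1) Vsub y(3)[rule_format]] y(5) that Vsub V(2) by auto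
  have sc: "strongly_connected_set A V" using V(1) unfolding is_scc_def by simp
  obtain w where w: "w \<in> carrier_vec m" "\<forall>l<m. 0 \<le> w $ l"
    "\<forall>l\<in>V. (A *\<^sub>v w) $ l \<le> sr A * w $ l" "\<forall>l\<in>V. w $ l = 0" "\<exists>\<tau>. w = x - \<tau> \<cdot>\<^sub>v y"
    by (rule subinvariant_minus_perron_multiple[OF sc Vsub y(1,2) y(3)[rule_format] i1 eig x])
  \<comment> \<open>the edge leaving V forces the gap to vanish at j, where y is zero but x is not\<close>
  have "w $ j = 0"
    using w(2,3,4) W(3) by (intro subinvariant_zero_successor[OF w(1) _ im _ _ W(5)]) auto
  moreover obtain \<tau> where "w = x - \<tau> \<cdot>\<^sub>v y" using w(5) by blast
  then have "w $ j = x $ j" using x(1) y(1) y(3) jm jV by simp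
  ultimately show False using pos_vecD[OF x(2,1) jm] by simp
qed

lemma basic_scc_pos_eigvec:
  assumes V: "is_scc A V" "sr (principal_submat A V) = sr A"
  obtains y where "\<forall>j\<in>V. 0 < y $ j" "\<forall>i\<in>V. (\<Sum>j\<in>V. A $$ (i,j) * y $ j) = sr A * y $ i"
proof -
  have Vsub: "V \<subseteq> {0..<m}" and Vne: "V \<noteq> {}" using is_scc_subset[OF V(1)] is_scc_nonempty[OF V(1)] .
  obtain y where y: "y \<in> carrier_vec m" "nonneg_vec y" "\<forall>i<m. i \<notin> V \<longrightarrow> y $ i = 0"
    "\<exists>i\<in>V. y $ i \<noteq> 0" "\<forall>i\<in>V. (\<Sum>j\<in>V. A $$ (i,j) * y $ j) = sr (principal_submat A V) * y $ i"
    by (rule principal_submat_perron_vector[OF A Vsub nn Vne])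
  have y0: "\<And>j. j < m \<Longrightarrow> 0 \<le> y $ j" using nonneg_vecD[OF y(2,1)] by blast
  have eig: "(A *\<^sub>v y) $ l \<le> sr A * y $ l" if "l \<in> V" for l
    using mult_vec_index_supported[OF y(1) Vsub y(3)[rule_format]] y(5) that Vsub V(2) by auto
  have sc: "strongly_connected_set A V" using V(1) unfolding is_scc_def by simp
  have "0 < y $ j" if j: "j \<in> V" for j
  proof (rule ccontr)
    assume "\<not> 0 < y $ j"
    then have "y $ j = 0" using y0[of j] j Vsub by auto
    then have "y $ i = 0" if "i \<in> V" for i
      using subinvariant_vanishes_on_strongly_connected[OF sc Vsub y(1) y0 eig j _ that] by blast
    with y(4) show False by blast
  qed
  then have "\<forall>j\<in>V. 0 < y $ j" by blast
  moreover have "\<forall>i\<in>V. (\<Sum>j\<in>V. A $$ (i,j) * y $ j) = sr A * y $ i" using y(5) V(2) by simp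
  ultimately show ?thesis by (rule that)
qed

text \<open>A class V is basic if sr A[V] = sr A (it never exceeds sr A).\<close>

definition nonbasic :: "nat set" where
  "nonbasic = {i. i < m \<and> sr (principal_submat A (scc_of A i)) \<noteq> sr A}"

lemma nonbasic_subset: "nonbasic \<subseteq> {0..<m}"
  unfolding nonbasic_def by auto

lemma scc_of_nonbasic: "i \<in> nonbasic \<Longrightarrow> j \<in> scc_of A i \<Longrightarrow> j \<in> nonbasic"
  unfolding nonbasic_def using scc_of_eq[of j A i] by (auto simp: scc_of_def dim_row_A)

lemma sr_nonbasic_less:
  assumes ne: "nonbasic \<noteq> {}"
  shows "sr (principal_submat A nonbasic) < sr A"
proof (rule ccontr)
  let ?N = nonbasic
  assume "\<not> ?thesis"
  then have ge: "sr A \<le> sr (principal_submat A ?N)" by simp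
  obtain z where z: "z \<in> carrier_vec m" "nonneg_vec z" "\<forall>i<m. i \<notin> ?N \<longrightarrow> z $ i = 0"
    "\<exists>i\<in>?N. z $ i \<noteq> 0" "\<forall>i\<in>?N. (\<Sum>j\<in>?N. A $$ (i,j) * z $ j) = sr (principal_submat A ?N) * z $ i"
    by (rule principal_submat_perron_vector[OF A nonbasic_subset nn ne])
  have z0: "\<And>j. j < m \<Longrightarrow> 0 \<le> z $ j" using nonneg_vecD[OF z(2,1)] by blast
  define T where "T = {i\<in>?N. 0 < z $ i}"
  have finN: "finite ?N" by (rule finite_subset[OF nonbasic_subset]) simp
  have finT: "finite T" by (rule finite_subset[OF _ finN]) (auto simp: T_def)
  obtain i1 where "i1 \<in> ?N" "z $ i1 \<noteq> 0" using z(4) by blast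
  then have "i1 \<in> T" unfolding T_def using z0[of i1] nonbasic_subset by (auto simp: less_le)
  \<comment> \<open>a vertex of the support of z from which no other class of the support is reachable\<close>
  then obtain i where iT: "i \<in> T" and reach_back: "\<forall>j\<in>T. (i,j) \<in> (edges A)\<^sup>* \<longrightarrow> (j,i) \<in> (edges A)\<^sup>*"
    by (rule exists_terminal_vertex[OF finT])
  have iN: "i \<in> ?N" and zi: "0 < z $ i" and im: "i < m" using iT nonbasic_subset unfolding T_def by auto
  define C where "C = scc_of A i"
  have iC: "i \<in> C" unfolding C_def using mem_scc_of[of i A] im by (simp add: dim_row_A)
  have CN: "C \<subseteq> ?N" unfolding C_def using scc_of_nonbasic[OF iN] by blast
  have Csub: "C \<subseteq> {0..<m}" using CN nonbasic_subset by blast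
  have sumC: "(\<Sum>j\<in>?N. A $$ (k,j) * z $ j) = (\<Sum>j\<in>C. A $$ (k,j) * z $ j)" if k: "k \<in> C" for k
  proof (rule sum.mono_neutral_right[OF finN CN], rule ballI)
    fix j assume j: "j \<in> ?N - C"
    show "A $$ (k,j) * z $ j = 0"
    proof (rule ccontr)
      assume nz: "A $$ (k,j) * z $ j \<noteq> 0"
      have jm: "j < m" and km: "k < m" using j k CN nonbasic_subset by auto
      have "j \<in> T" unfolding T_def using j nz z0[OF jm] by (auto simp: less_le)
      have "(i,k) \<in> (edges A)\<^sup>*" using k unfolding C_def scc_of_def by simp
      moreover have "(k,j) \<in> edges A" using nz edge_iff[OF km jm] by simp
      ultimately have ij: "(i,j) \<in> (edges A)\<^sup>*" by (rule rtrancl_into_rtrancl)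
      with reach_back \<open>j \<in> T\<close> have "(j,i) \<in> (edges A)\<^sup>*" by blast
      with ij jm have "j \<in> C" unfolding C_def scc_of_def by (simp add: dim_row_A)
      with j show False by simp
    qed
  qed
  have "sr A \<le> sr (principal_submat A C)"
  proof (rule sr_principal_submat_ge_if_superinvariant[OF A Csub nn z(1) _ iC])
    show "\<And>i. i \<in> C \<Longrightarrow> 0 \<le> z $ i" using z0 Csub by auto
    show "z $ i \<noteq> 0" using zi by simp
    fix k assume k: "k \<in> C"
    have "sr A * z $ k \<le> sr (principal_submat A ?N) * z $ k"
      using ge z0[of k] k Csub by (intro mult_right_mono) auto
    also have "\<dots> = (\<Sum>j\<in>C. A $$ (k,j) * z $ j)" using z(5) k CN sumC[OF k] by auto
    finally show "sr A * z $ k \<le> (\<Sum>j\<in>C. A $$ (k,j) * z $ j)" .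
  qed
  moreover have "sr (principal_submat A C) \<le> sr A" using iC by (intro sr_principal_submat_le[OF Csub]) auto
  ultimately have "sr (principal_submat A (scc_of A i)) = sr A" unfolding C_def by simp
  with iN show False unfolding nonbasic_def by simp
qed

lemma basic_part_vector:
  obtains xB :: "nat \<Rightarrow> real" where "\<forall>i<m. i \<notin> nonbasic \<longrightarrow> 0 < xB i"
    "\<forall>i<m. i \<notin> nonbasic \<longrightarrow> (\<Sum>j\<in>scc_of A i. A $$ (i,j) * xB j) = sr A * xB i"
proof -
  let ?basic = "\<lambda>V. is_scc A V \<and> sr (principal_submat A V) = sr A"
  have "\<exists>y. ?basic V \<longrightarrow> (\<forall>j\<in>V. 0 < y $ j) \<and> (\<forall>i\<in>V. (\<Sum>j\<in>V. A $$ (i,j) * y $ j) = sr A * y $ i)" for V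
  proof (cases "?basic V")
    case True
    then obtain y where "\<forall>j\<in>V. 0 < y $ j" "\<forall>i\<in>V. (\<Sum>j\<in>V. A $$ (i,j) * y $ j) = sr A * y $ i"
      using basic_scc_pos_eigvec by blast
    then show ?thesis by blast
  qed auto
  then obtain Y where Y: "\<forall>V. ?basic V \<longrightarrow> (\<forall>j\<in>V. 0 < Y V $ j) \<and>
      (\<forall>i\<in>V. (\<Sum>j\<in>V. A $$ (i,j) * Y V $ j) = sr A * Y V $ i)"
    using choice[of "\<lambda>V y. ?basic V \<longrightarrow> (\<forall>j\<in>V. 0 < y $ j) \<and>
      (\<forall>i\<in>V. (\<Sum>j\<in>V. A $$ (i,j) * y $ j) = sr A * y $ i)"] by blast
  define xB where "xB i = Y (scc_of A i) $ i" for i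
  have "0 < xB i \<and> (\<Sum>j\<in>scc_of A i. A $$ (i,j) * xB j) = sr A * xB i" if "i < m" "i \<notin> nonbasic" for i
  proof -
    let ?V = "scc_of A i"
    have iV: "i \<in> ?V" using mem_scc_of[of i A] that by (simp add: dim_row_A)
    have "?basic ?V" using is_scc_scc_of[of i A] that by (simp add: nonbasic_def dim_row_A)
    with Y have pos: "\<forall>j\<in>?V. 0 < Y ?V $ j"
      and eig: "\<forall>k\<in>?V. (\<Sum>j\<in>?V. A $$ (k,j) * Y ?V $ j) = sr A * Y ?V $ k" by blast+
    have xBV: "xB j = Y ?V $ j" if "j \<in> ?V" for j
      using scc_of_eq[OF that] by (simp add: xB_def)
    have "(\<Sum>j\<in>?V. A $$ (i,j) * xB j) = (\<Sum>j\<in>?V. A $$ (i,j) * Y ?V $ j)"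
      by (intro sum.cong) (simp_all add: xBV)
    also have "\<dots> = sr A * xB i" using eig iV xBV[OF iV] by simp
    finally show ?thesis using pos iV xBV[OF iV] by simp
  qed
  with that show ?thesis by blast
qed

lemma basic_scc_of:
  assumes "i < m" "i \<notin> nonbasic" "j \<in> scc_of A i"
  shows "j \<notin> nonbasic"
proof
  assume "j \<in> nonbasic"
  moreover have "i \<in> scc_of A j" using scc_of_eq[OF assms(3)] mem_scc_of[of i A] assms(1)
    by (simp add: dim_row_A)
  ultimately have "i \<in> nonbasic" by (rule scc_of_nonbasic)
  with assms(2) show False by contradiction
qed

text \<open>On the nonbasic vertices N, solve (sr A - A[N]) x = (inflow from the basic part) + 1;
  this is possible with x > 0 because sr A[N] < sr A.\<close>

lemma nonbasic_part_vector:
  assumes xB: "\<forall>i<m. i \<notin> nonbasic \<longrightarrow> 0 < xB i"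
  obtains xN where "\<forall>i\<in>nonbasic. 0 < xN i"
    "\<forall>i\<in>nonbasic. (\<Sum>j\<in>{..<m} - nonbasic. A $$ (i,j) * xB j) + (\<Sum>j\<in>nonbasic. A $$ (i,j) * xN j)
       = sr A * xN i - 1"
proof -
  let ?N = nonbasic
  define c where "c i = (\<Sum>j\<in>{..<m} - ?N. A $$ (i,j) * xB j) + 1" for i
  have cpos: "0 < c i" if "i \<in> ?N" for i
  proof -
    have "i < m" using that nonbasic_subset by auto
    then have "0 \<le> (\<Sum>j\<in>{..<m} - ?N. A $$ (i,j) * xB j)"
      using A_nonneg xB by (intro sum_nonneg) (simp add: less_imp_le)
    then show ?thesis unfolding c_def by simp
  qed
  obtain xN where xN: "\<forall>i\<in>?N. 0 < xN i" "\<forall>i\<in>?N. sr A * xN i - (\<Sum>j\<in>?N. A $$ (i,j) * xN j) = c i"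
  proof (cases "?N = {}")
    case True
    then show ?thesis using that[of "\<lambda>_. 1"] by simp
  next
    case False
    show ?thesis
    proof (rule principal_submat_shifted_solution_pos[OF A nonbasic_subset nn False sr_nonbasic_less[OF False]])
      show "\<And>i. i \<in> ?N \<Longrightarrow> 0 < c i" by (rule cpos)
    qed (rule that)
  qed
  have "\<forall>i\<in>?N. (\<Sum>j\<in>{..<m} - ?N. A $$ (i,j) * xB j) + (\<Sum>j\<in>?N. A $$ (i,j) * xN j)
      = sr A * xN i - 1"
    using xN(2) unfolding c_def by (simp add: algebra_simps)
  with xN(1) show ?thesis by (rule that)
qed

lemma pos_subinvariant_if_basic_sinks:
  assumes H: "\<And>V. is_scc A V \<Longrightarrow> sr (principal_submat A V) = sr A \<Longrightarrow> is_sink A V"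
  obtains x where "x \<in> carrier_vec m" "pos_vec x" "\<forall>i<m. (A *\<^sub>v x) $ i \<le> sr A * x $ i"
proof -
  let ?N = nonbasic
  obtain xB where xB: "\<forall>i<m. i \<notin> ?N \<longrightarrow> 0 < xB i"
    "\<forall>i<m. i \<notin> ?N \<longrightarrow> (\<Sum>j\<in>scc_of A i. A $$ (i,j) * xB j) = sr A * xB i"
    by (rule basic_part_vector)
  obtain xN where xN: "\<forall>i\<in>?N. 0 < xN i"
    "\<forall>i\<in>?N. (\<Sum>j\<in>{..<m} - ?N. A $$ (i,j) * xB j) + (\<Sum>j\<in>?N. A $$ (i,j) * xN j) = sr A * xN i - 1"
    by (rule nonbasic_part_vector[OF xB(1)])
  define x where "x = vec m (\<lambda>i. if i \<in> ?N then xN i else xB i)"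
  have x: "x \<in> carrier_vec m" by (simp add: x_def)
  have xi: "x $ i = (if i \<in> ?N then xN i else xB i)" if "i < m" for i using that by (simp add: x_def)
  have "0 < x $ i" if "i < m" for i using xi[OF that] xN(1) xB(1) that by auto
  then have px: "pos_vec x" unfolding pos_vec_def using x by simp
  have "(A *\<^sub>v x) $ i \<le> sr A * x $ i" if i: "i < m" for i
  proof (cases "i \<in> ?N")
    case True
    have "(A *\<^sub>v x) $ i = (\<Sum>j\<in>{..<m} - ?N. A $$ (i,j) * x $ j) + (\<Sum>j\<in>?N. A $$ (i,j) * x $ j)"
      unfolding mult_mat_vec_index_sum[OF A x i] using nonbasic_subset
      by (intro sum.subset_diff) auto
    also have "\<dots> = (\<Sum>j\<in>{..<m} - ?N. A $$ (i,j) * xB j) + (\<Sum>j\<in>?N. A $$ (i,j) * xN j)"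
      using nonbasic_subset by (intro arg_cong2[where f = "(+)"] sum.cong) (auto simp: xi)
    also have "\<dots> \<le> sr A * x $ i" using xN(2) True xi[OF i] by simp
    finally show ?thesis .
  next
    case False
    let ?V = "scc_of A i"
    have V: "is_scc A ?V" "sr (principal_submat A ?V) = sr A"
      using is_scc_scc_of[of i A] i False by (simp_all add: nonbasic_def dim_row_A)
    have iV: "i \<in> ?V" using mem_scc_of[of i A] i by (simp add: dim_row_A)
    have "x $ j = xB j" if "j \<in> ?V" for j
      using basic_scc_of[OF i False that] xi[of j] that is_scc_subset[OF V(1)] by auto
    then have "(A *\<^sub>v x) $ i = (\<Sum>j\<in>?V. A $$ (i,j) * xB j)"
      using mult_vec_index_sink[OF V(1) H[OF V] iV x] by simp
    then show ?thesis using xB(2) i False xi[OF i] by simp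
  qed
  with x px that show ?thesis by blast
qed

lemma max_ratio_attainable_iff:
  "(\<exists>x. x \<in> carrier_vec m \<and> pos_vec x \<and> sr A = (MAX i\<in>{0..<m}. (A *\<^sub>v x) $ i / x $ i))
   \<longleftrightarrow> (\<forall>V. is_scc A V \<and> sr (principal_submat A V) = sr A \<longrightarrow> is_sink A V)"
proof
  assume "\<exists>x. x \<in> carrier_vec m \<and> pos_vec x \<and> sr A = (MAX i\<in>{0..<m}. (A *\<^sub>v x) $ i / x $ i)"
  then obtain x where x: "x \<in> carrier_vec m" "pos_vec x" "\<forall>i<m. (A *\<^sub>v x) $ i \<le> sr A * x $ i"
    using sr_eq_max_ratio_iff by blast
  then show "\<forall>V. is_scc A V \<and> sr (principal_submat A V) = sr A \<longrightarrow> is_sink A V"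
    using sink_if_pos_subinvariant[OF x(1,2)] by blast
next
  assume "\<forall>V. is_scc A V \<and> sr (principal_submat A V) = sr A \<longrightarrow> is_sink A V"
  then obtain x where "x \<in> carrier_vec m" "pos_vec x" "\<forall>i<m. (A *\<^sub>v x) $ i \<le> sr A * x $ i"
    using pos_subinvariant_if_basic_sinks by blast
  then show "\<exists>x. x \<in> carrier_vec m \<and> pos_vec x \<and> sr A = (MAX i\<in>{0..<m}. (A *\<^sub>v x) $ i / x $ i)"
    using sr_eq_max_ratio_iff by blast
qed

lemma quot_conv_le_r_ratio:
  assumes x: "x \<in> carrier_vec m" and i: "i < m"
  shows "quot_conv ((A *\<^sub>v x) $ i) (x $ i) \<le> r_ratio A (1\<^sub>m m) x"
proof -
  have "quot_conv ((A *\<^sub>v x) $ i) ((1\<^sub>m m *\<^sub>v x) $ i) \<le> r_ratio A (1\<^sub>m m) x"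
    unfolding r_ratio_def dim_row_A using i by (intro Max_ge) auto
  then show ?thesis using x by simp
qed

lemma predecessor_in_support:
  assumes x: "x \<in> carrier_vec m" "nonneg_vec x"
    and zero: "\<And>a. a < m \<Longrightarrow> x $ a = 0 \<Longrightarrow> (A *\<^sub>v x) $ a = 0"
    and e: "(a,b) \<in> edges A" and b: "0 < x $ b"
  shows "0 < x $ a"
proof -
  have am: "a < m" and bm: "b < m" using edges_bounded[OF e] by (simp_all add: dim_row_A)
  have x0: "\<And>j. j < m \<Longrightarrow> 0 \<le> x $ j" using nonneg_vecD[OF x(2,1)] by blast
  have "0 < A $$ (a,b) * x $ b" using e edge_iff[OF am bm] A_nonneg[OF am bm] b by simp
  also have "\<dots> \<le> (\<Sum>j<m. A $$ (a,j) * x $ j)"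
    by (rule member_le_sum) (use bm A_nonneg[OF am] x0 in auto)
  finally have "(A *\<^sub>v x) $ a \<noteq> 0" by (simp add: mult_mat_vec_index_sum[OF A x(1) am])
  then have "x $ a \<noteq> 0" using zero am by blast
  then show ?thesis using x0[OF am] by simp
qed

lemma source_sr_le_r_ratio:
  assumes x: "x \<in> carrier_vec m" "nonneg_vec x" "x \<noteq> 0\<^sub>v m"
  obtains V where "is_scc A V" "is_source A V" "ereal (sr (principal_submat A V)) \<le> r_ratio A (1\<^sub>m m) x"
proof (cases "\<exists>a<m. x $ a = 0 \<and> (A *\<^sub>v x) $ a \<noteq> 0")
  case True
  then obtain a where a: "a < m" "x $ a = 0" "(A *\<^sub>v x) $ a \<noteq> 0" by blast
  then have "r_ratio A (1\<^sub>m m) x = \<infinity>" using quot_conv_le_r_ratio[OF x(1) a(1)] by (simp add: quot_conv_def)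
  obtain V where "is_scc A V" "is_source A V" "V \<subseteq> {0..<m}"
    by (rule source_scc_within[of 0 "{0..<m}" A]) (use m edges_bounded[of _ _ A] in \<open>auto simp: dim_row_A\<close>)
  with \<open>r_ratio A (1\<^sub>m m) x = \<infinity>\<close> that show ?thesis by simp
next
  case False
  have x0: "\<And>j. j < m \<Longrightarrow> 0 \<le> x $ j" using nonneg_vecD[OF x(2,1)] by blast
  \<comment> \<open>the support of x is closed under predecessors, so it contains a source class\<close>
  define S where "S = {i. i < m \<and> 0 < x $ i}"
  obtain i0 where i0: "i0 < m" "x $ i0 \<noteq> 0" using nonzero_vec_index[OF x(1,3)] by blast
  have i0S: "i0 \<in> S" unfolding S_def using i0 x0[OF i0(1)] by (simp add: less_le)
  have closed: "a \<in> S" if "(a,b) \<in> edges A" "b \<in> S" for a b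
    using predecessor_in_support[OF x(1,2) _ that(1)] that(2) False edges_bounded[OF that(1)]
    unfolding S_def by (auto simp: dim_row_A)
  obtain V where V: "is_scc A V" "is_source A V" "V \<subseteq> S"
    by (rule source_scc_within[OF i0S]) (use closed in \<open>auto simp: S_def dim_row_A\<close>)
  have Vsub: "V \<subseteq> {0..<m}" and Vne: "V \<noteq> {}" using is_scc_subset[OF V(1)] is_scc_nonempty[OF V(1)] .
  obtain y where y: "y \<in> carrier_vec m" "nonneg_vec y" "\<forall>i<m. i \<notin> V \<longrightarrow> y $ i = 0"
    "\<exists>i\<in>V. y $ i \<noteq> 0" "\<forall>i\<in>V. (\<Sum>j\<in>V. A $$ (i,j) * y $ j) = sr (principal_submat A V) * y $ i"
    by (rule principal_submat_perron_vector[OF A Vsub nn Vne])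
  obtain i1 where i1: "i1 \<in> V" "y $ i1 \<noteq> 0" using y(4) by blast
  have y0: "\<And>j. j < m \<Longrightarrow> 0 \<le> y $ j" using nonneg_vecD[OF y(2,1)] by blast
  have ysupp: "\<And>j. j < m \<Longrightarrow> j \<notin> V \<Longrightarrow> y $ j = 0" using y(3) by blast
  have xV: "\<And>l. l \<in> V \<Longrightarrow> 0 < x $ l" using V(3) unfolding S_def by auto
  obtain \<tau> l0 where \<tau>: "0 < \<tau>" "l0 \<in> V" "0 < y $ l0" "x $ l0 = \<tau> * y $ l0"
    "\<And>l. l < m \<Longrightarrow> \<tau> * y $ l \<le> x $ l"
    using maximal_multiple_below[OF Vsub y(1) y0 ysupp i1 xV x0] by blast
  have l0m: "l0 < m" using \<tau>(2) Vsub by auto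
  have "sr (principal_submat A V) * x $ l0 = \<tau> * (\<Sum>j\<in>V. A $$ (l0,j) * y $ j)"
    using y(5)[rule_format, OF \<tau>(2)] \<tau>(4) by (simp add: mult_ac)
  also have "\<dots> = (\<Sum>j\<in>V. A $$ (l0,j) * (\<tau> * y $ j))"
    by (simp add: sum_distrib_left mult_ac)
  also have "\<dots> \<le> (\<Sum>j\<in>V. A $$ (l0,j) * x $ j)"
    by (intro sum_mono mult_left_mono) (use \<tau>(5) A_nonneg[OF l0m] Vsub in auto)
  also have "\<dots> \<le> (\<Sum>j<m. A $$ (l0,j) * x $ j)"
    by (rule sum_mono2) (use Vsub A_nonneg[OF l0m] x0 in auto)
  also have "\<dots> = (A *\<^sub>v x) $ l0" by (rule mult_mat_vec_index_sum[OF A x(1) l0m, symmetric])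
  finally have "sr (principal_submat A V) \<le> (A *\<^sub>v x) $ l0 / x $ l0"
    using xV[OF \<tau>(2)] by (simp add: le_divide_eq)
  also have "ereal \<dots> = quot_conv ((A *\<^sub>v x) $ l0) (x $ l0)"
    using xV[OF \<tau>(2)] by (simp add: quot_conv_def)
  finally show ?thesis using quot_conv_le_r_ratio[OF x(1) l0m] that[OF V(1,2)] by simp
qed

lemma source_scc_eigenvector:
  assumes V: "is_scc A V" "is_source A V"
  obtains w where "w \<in> carrier_vec m" "nonneg_vec w" "w \<noteq> 0\<^sub>v m" "A *\<^sub>v w = sr (principal_submat A V) \<cdot>\<^sub>v w"
proof -
  have Vsub: "V \<subseteq> {0..<m}" and Vne: "V \<noteq> {}" using is_scc_subset[OF V(1)] is_scc_nonempty[OF V(1)] .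
  obtain y where y: "y \<in> carrier_vec m" "nonneg_vec y" "\<forall>i<m. i \<notin> V \<longrightarrow> y $ i = 0"
    "\<exists>i\<in>V. y $ i \<noteq> 0" "\<forall>i\<in>V. (\<Sum>j\<in>V. A $$ (i,j) * y $ j) = sr (principal_submat A V) * y $ i"
    by (rule principal_submat_perron_vector[OF A Vsub nn Vne])
  have "y \<noteq> 0\<^sub>v m" using y(4) Vsub by auto
  \<comment> \<open>no edge enters a source class, so the Perron vector of A[V] is an eigenvector of A\<close>
  moreover have "A *\<^sub>v y = sr (principal_submat A V) \<cdot>\<^sub>v y"
  proof (rule eq_vecI)
    fix i assume "i < dim_vec (sr (principal_submat A V) \<cdot>\<^sub>v y)"
    then have i: "i < m" using y(1) by simp
    have Ay: "(A *\<^sub>v y) $ i = (\<Sum>j\<in>V. A $$ (i,j) * y $ j)"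
      by (rule mult_vec_index_supported[OF y(1) Vsub y(3)[rule_format] i])
    show "(A *\<^sub>v y) $ i = (sr (principal_submat A V) \<cdot>\<^sub>v y) $ i"
    proof (cases "i \<in> V")
      case True
      then show ?thesis using Ay y(1,5) i by simp
    next
      case False
      have "A $$ (i,j) = 0" if j: "j \<in> V" for j
      proof -
        have "j < m" using j Vsub by auto
        moreover have "(i,j) \<notin> edges A" using is_source_edge_closed[OF V(2) j] False by blast
        ultimately show ?thesis using edge_iff[OF i] by simp
      qed
      then show ?thesis using Ay y(1,3) i False by simp
    qed
  qed (use y(1) A in simp)
  ultimately show ?thesis using that y(1,2) by blast
qed

lemma r_ratio_eigenvector_le:
  assumes w: "w \<in> carrier_vec m" "A *\<^sub>v w = \<mu> \<cdot>\<^sub>v w" and \<mu>: "0 \<le> \<mu>"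
  shows "r_ratio A (1\<^sub>m m) w \<le> ereal \<mu>"
  unfolding r_ratio_def dim_row_A
proof (subst Max_le_iff, simp, use m in simp, rule ballI)
  fix r assume "r \<in> (\<lambda>i. quot_conv ((A *\<^sub>v w) $ i) ((1\<^sub>m m *\<^sub>v w) $ i)) ` {0..<m}"
  then obtain i where i: "i < m" and r: "r = quot_conv ((A *\<^sub>v w) $ i) (w $ i)" using w(1) by auto
  have "(A *\<^sub>v w) $ i = \<mu> * w $ i" using w i by simp
  then show "r \<le> ereal \<mu>" using \<mu> unfolding r quot_conv_def by auto
qed

lemma min_source_sr_attained:
  obtains V0 where "is_scc A V0" "is_source A V0"
    "sr (principal_submat A V0) = Min {sr (principal_submat A V) | V. is_scc A V \<and> is_source A V}"
proof -
  let ?S = "{V. is_scc A V \<and> is_source A V}"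
  have "?S \<subseteq> Pow {0..<m}" using is_scc_subset by auto
  then have "finite ?S" by (rule finite_subset) simp
  moreover obtain V where "is_scc A V" "is_source A V" "V \<subseteq> {0..<m}"
    by (rule source_scc_within[of 0 "{0..<m}" A]) (use m edges_bounded[of _ _ A] in \<open>auto simp: dim_row_A\<close>)
  then have "?S \<noteq> {}" by blast
  ultimately have "Min ((\<lambda>V. sr (principal_submat A V)) ` ?S) \<in> (\<lambda>V. sr (principal_submat A V)) ` ?S"
    by (intro Min_in) auto
  moreover have "{sr (principal_submat A V) | V. is_scc A V \<and> is_source A V} = (\<lambda>V. sr (principal_submat A V)) ` ?S"
    by blast
  ultimately show ?thesis using that by auto
qed

lemma min_source_sr_le:
  assumes "is_scc A V" "is_source A V"
  shows "Min {sr (principal_submat A V) | V. is_scc A V \<and> is_source A V} \<le> sr (principal_submat A V)"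
proof -
  have "{V. is_scc A V \<and> is_source A V} \<subseteq> Pow {0..<m}" using is_scc_subset by auto
  then have "finite {V. is_scc A V \<and> is_source A V}" by (rule finite_subset) simp
  then have "finite {sr (principal_submat A V) | V. is_scc A V \<and> is_source A V}" by simp
  with assms show ?thesis by (intro Min_le) auto
qed

lemma rho_hat_pair_eq_min_source:
  "rho_hat_pair A (1\<^sub>m m) = ereal (Min {sr (principal_submat A V) | V. is_scc A V \<and> is_source A V})"
  (is "_ = ereal ?\<mu>")
proof (rule antisym)
  obtain V0 where V0: "is_scc A V0" "is_source A V0" "sr (principal_submat A V0) = ?\<mu>"
    by (rule min_source_sr_attained)
  obtain w where w: "w \<in> carrier_vec m" "nonneg_vec w" "w \<noteq> 0\<^sub>v m" "A *\<^sub>v w = ?\<mu> \<cdot>\<^sub>v w"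
    using source_scc_eigenvector[OF V0(1,2)] V0(3) by metis
  have "0 \<le> ?\<mu>"
    unfolding V0(3)[symmetric] using is_scc_subset[OF V0(1)] is_scc_nonempty[OF V0(1)]
    by (intro sr_nonneg[OF principal_submat_carrier[OF A]]) (auto simp: card_gt_0_iff finite_subset)
  have "rho_hat_pair A (1\<^sub>m m) \<le> r_ratio A (1\<^sub>m m) w"
    unfolding rho_hat_pair_def using A w(1-3) by (intro Inf_lower) auto
  also have "\<dots> \<le> ereal ?\<mu>" by (rule r_ratio_eigenvector_le[OF w(1,4) \<open>0 \<le> ?\<mu>\<close>])
  finally show "rho_hat_pair A (1\<^sub>m m) \<le> ereal ?\<mu>" .
  show "ereal ?\<mu> \<le> rho_hat_pair A (1\<^sub>m m)"
    unfolding rho_hat_pair_def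
  proof (rule Inf_greatest, clarify)
    fix x assume x: "x \<in> carrier_vec (dim_col A)" "nonneg_vec x" "x \<noteq> 0\<^sub>v (dim_col A)"
    then have x': "x \<in> carrier_vec m" "nonneg_vec x" "x \<noteq> 0\<^sub>v m" using A by auto
    obtain V where "is_scc A V" "is_source A V" "ereal (sr (principal_submat A V)) \<le> r_ratio A (1\<^sub>m m) x"
      by (rule source_sr_le_r_ratio[OF x'])
    with min_source_sr_le show "ereal ?\<mu> \<le> r_ratio A (1\<^sub>m m) x" by (meson ereal_less_eq(3) order_trans)
  qed
qed

lemma rho_hat_pair_eigenvector:
  "\<exists>w. w \<in> carrier_vec m \<and> nonneg_vec w \<and> w \<noteq> 0\<^sub>v m \<and>
     A *\<^sub>v w = real_of_ereal (rho_hat_pair A (1\<^sub>m m)) \<cdot>\<^sub>v w"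
proof -
  obtain V0 where V0: "is_scc A V0" "is_source A V0"
    "sr (principal_submat A V0) = Min {sr (principal_submat A V) | V. is_scc A V \<and> is_source A V}"
    by (rule min_source_sr_attained)
  obtain w where "w \<in> carrier_vec m" "nonneg_vec w" "w \<noteq> 0\<^sub>v m"
    "A *\<^sub>v w = sr (principal_submat A V0) \<cdot>\<^sub>v w"
    by (rule source_scc_eigenvector[OF V0(1,2)])
  then show ?thesis using V0(3) by (auto simp: rho_hat_pair_eq_min_source)
qed

end

theorem theorem3p2:
  fixes A :: "real mat" and m :: nat
  assumes A: "A \<in> carrier_mat m m" and m: "m > 0" and nn: "nonneg_mat A"
  shows
    "(rho_pair A (1\<^sub>m m) = ereal (sr A) \<and>
     (\<exists>y. y \<in> carrier_vec m \<and> nonneg_vec y \<and> y \<noteq> 0\<^sub>v m \<and> A *\<^sub>v y = sr A \<cdot>\<^sub>v y)) \<and>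
     ((\<exists>x. x \<in> carrier_vec m \<and> pos_vec x \<and>
          sr A = (MAX i\<in>{0..<m}. (A *\<^sub>v x) $ i / x $ i))
     \<longleftrightarrow> (\<forall>V. is_scc A V \<and> sr (principal_submat A V) = sr A \<longrightarrow> is_sink A V)) \<and>
     (irreducible_mat A \<longrightarrow>
     (\<exists>\<^sub>\<le>\<^sub>1 x. x \<in> carrier_vec m \<and> pos_vec x \<and> (\<Sum>i<m. x $ i) = 1 \<and>
          sr A = (MAX i\<in>{0..<m}. (A *\<^sub>v x) $ i / x $ i))) \<and>
     (rho_hat_pair A (1\<^sub>m m) = ereal (Min {sr (principal_submat A V) | V. is_scc A V \<and> is_source A V}) \<and>
     (\<exists>w. w \<in> carrier_vec m \<and> nonneg_vec w \<and> w \<noteq> 0\<^sub>v m \<and>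
          A *\<^sub>v w = real_of_ereal (rho_hat_pair A (1\<^sub>m m)) \<cdot>\<^sub>v w))"
proof -
  interpret nonneg_square A m using A nn m by unfold_locales
  obtain y where "y \<in> carrier_vec m" "nonneg_vec y" "y \<noteq> 0\<^sub>v m" "A *\<^sub>v y = sr A \<cdot>\<^sub>v y"
    by (rule perron_eigenvector[OF nn A m])
  then show ?thesis
    using rho_pair_eq_sr max_ratio_attainable_iff normalized_max_ratio_vector_unique
      rho_hat_pair_eq_min_source rho_hat_pair_eigenvector by blast
qed

end
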